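(* Let $\mathcal K$ be a quantum channel on $n\times n$ matrices described by Kraus operators $K_1,\dots,K_d\in\mathbb C^{n\times n}$ (with $\mathcal K(\rho)=\sum_j K_j\rho K_j^\dagger$, $\sum_j K_j^\dagger K_j=I_n$) such that $K_1=\alpha I_n$ for some $\alpha\in\mathbb C$ and $\mathrm{Tr}(K_j)=0$ for $j=2,\dots,d$. Then $\lVert\mathcal K\rVert=\cos^{-1}\lvert\alpha\rvert$, with $\cos^{-1}$ taking values in $[0,\pi]$.
   Context: For a unitary matrix $U$ of size $r$ with eigenvalues $e^{i\theta_j}$, $\theta_j\in(-\pi,\pi]$, its time-energy cost is $\lVert U\rVert=\max_{1\le j\le r}|\theta_j|$. For a quantum channel $\mathcal K$ acting on an $n$-dimensional system $A$, its time-energy cost is $\lVert\mathcal K\rVert=\inf_U\lVert U\rVert$, where the infimum is over all finite-dimensional ancilla systems $B$ with a fixed standard state $|0\rangle_B$ and all unitaries $U_{BA}$ on $B\otimes A$ such that $\mathcal K(\rho)=\mathrm{Tr}_B[U_{BA}(|0\rangle_B\langle 0|\otimes\rho_A)U_{BA}^\dagger]$ for all density matrices $\rho$ on $A$. *)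

theory Defs
  imports "HOL-Analysis.Complex_Transcendental" "Jordan_Normal_Form.Schur_Decomposition"
begin

text \<open>An ancilla system B of dimension m and the system A of dimension n
  are combined into B \<otimes> A of dimension m*n, where the basis vector |b> \<otimes> |a>
  has index b*n + a. The standard ancilla state |0>_B is the first basis vector.\<close>

definition unitary_mat :: "nat \<Rightarrow> complex mat \<Rightarrow> bool" where
  "unitary_mat r U \<longleftrightarrow> U \<in> carrier_mat r r \<and> U * mat_adjoint U = 1\<^sub>m r \<and> mat_adjoint U * U = 1\<^sub>m r"

text \<open>Time-energy cost of a unitary: max |theta_j| over eigenvalues e^(i theta_j),
  theta_j in (-pi, pi] (this is exactly the range of Arg).\<close>
definition unitary_cost :: "complex mat \<Rightarrow> real" where
  "unitary_cost U = Max {\<bar>Arg z\<bar> | z. eigenvalue U z}"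

definition mat_trace :: "complex mat \<Rightarrow> complex" where
  "mat_trace A = (\<Sum>i<dim_row A. A $$ (i, i))"

definition density_mat :: "nat \<Rightarrow> complex mat \<Rightarrow> bool" where
  "density_mat n \<rho> \<longleftrightarrow> \<rho> \<in> carrier_mat n n \<and> mat_trace \<rho> = 1 \<and>
     (\<forall>v \<in> carrier_vec n. let z = conjugate v \<bullet> (\<rho> *\<^sub>v v) in Im z = 0 \<and> Re z \<ge> 0)"

text \<open>|0><0|_B \<otimes> \<rho>_A, with dim B = m.\<close>
definition anc_state :: "nat \<Rightarrow> nat \<Rightarrow> complex mat \<Rightarrow> complex mat" where
  "anc_state m n \<rho> = mat (m * n) (m * n)
     (\<lambda>(i, j). if i < n \<and> j < n then \<rho> $$ (i, j) else 0)"

definition ptrace_B :: "nat \<Rightarrow> nat \<Rightarrow> complex mat \<Rightarrow> complex mat" where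
  "ptrace_B m n X = mat n n (\<lambda>(a, a'). \<Sum>b<m. X $$ (b * n + a, b * n + a'))"

definition channel_cost :: "nat \<Rightarrow> (complex mat \<Rightarrow> complex mat) \<Rightarrow> real" where
  "channel_cost n \<Phi> = Inf {unitary_cost U | U m. m \<ge> 1 \<and> unitary_mat (m * n) U \<and>
     (\<forall>\<rho>. density_mat n \<rho> \<longrightarrow>
        \<Phi> \<rho> = ptrace_B m n (U * anc_state m n \<rho> * mat_adjoint U))}"

definition kraus_channel :: "nat \<Rightarrow> nat \<Rightarrow> (nat \<Rightarrow> complex mat) \<Rightarrow> complex mat \<Rightarrow> complex mat" where
  "kraus_channel n d K \<rho> = mat n n (\<lambda>(i, k). \<Sum>j<d. (K j * \<rho> * mat_adjoint (K j)) $$ (i, k))"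

end

theory Submission
  imports Defs "Jordan_Normal_Form.Spectral_Radius"
begin

text \<open>The blocks \<open>U\<^sub>b\<close> of the first block column of a dilation U form a second Kraus
  representation of the channel, so testing on pure states and polarizing gives
  \<open>\<Sum>\<^sub>b |tr U\<^sub>b|\<^sup>2 = \<Sum>\<^sub>j |tr K\<^sub>j|\<^sup>2 = n\<^sup>2 |\<alpha>|\<^sup>2\<close>, hence \<open>|tr U\<^sub>0| \<le> n |\<alpha>|\<close>. All eigenvalues of U lie on the
  arc \<open>|arg z| \<le> t\<close>, t the cost of U, so by a Schur-type deflation the numerical range of U lies in
  \<open>Re z \<ge> cos t\<close>; applied to the diagonal of \<open>U\<^sub>0\<close> this gives \<open>n cos t \<le> n |\<alpha>|\<close>, i.e.
  \<open>t \<ge> arccos |\<alpha>|\<close>.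

  An explicit dilation of the form \<open>|\<alpha>| I + Z\<close> with Z skew-Hermitian and
  \<open>Z\<^sup>2 = (|\<alpha>|\<^sup>2 - 1) I\<close> has spectrum \<open>exp (\<plusminus> i arccos |\<alpha>|)\<close>.\<close>

lemma dim_row_mat_adjoint [simp]: "dim_row (mat_adjoint A) = dim_col A"
  and dim_col_mat_adjoint [simp]: "dim_col (mat_adjoint A) = dim_row A"
  by (auto simp: mat_adjoint_def)

lemma index_mat_adjoint [simp]:
  "i < dim_col A \<Longrightarrow> j < dim_row A \<Longrightarrow> mat_adjoint A $$ (i,j) = cnj (A $$ (j,i))"
  by (auto simp: mat_adjoint_def mat_of_rows_def)

lemma mat_adjoint_carrier: "A \<in> carrier_mat r c \<Longrightarrow> mat_adjoint A \<in> carrier_mat c r"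
  by (intro carrier_matI) auto

lemma index_adjoint_mult_mat:
  assumes "A \<in> carrier_mat r c" "B \<in> carrier_mat r c'" "i < c" "j < c'"
  shows "(mat_adjoint A * B) $$ (i,j) = (\<Sum>k<r. cnj (A $$ (k,i)) * B $$ (k,j))"
  using assms by (auto simp: scalar_prod_def atLeast0LessThan intro!: sum.cong)

lemma index_mult_mat_adjoint:
  assumes "A \<in> carrier_mat r c" "B \<in> carrier_mat r' c" "i < r" "j < r'"
  shows "(A * mat_adjoint B) $$ (i,j) = (\<Sum>k<c. A $$ (i,k) * cnj (B $$ (j,k)))"
  using assms by (auto simp: scalar_prod_def atLeast0LessThan intro!: sum.cong)

lemma index_mult_mat3:
  assumes "A \<in> carrier_mat r s" "B \<in> carrier_mat s t" "C \<in> carrier_mat t u" "i < r" "j < u"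
  shows "(A * B * C) $$ (i,j) = (\<Sum>k<t. \<Sum>l<s. A $$ (i,l) * B $$ (l,k) * C $$ (k,j))"
  using assms
  by (auto simp: scalar_prod_def sum_distrib_right atLeast0LessThan simp del: assoc_mult_mat
      intro!: sum.cong)

lemma mult_delta_left: "(if P then 1 else 0) * (x::'a::semiring_1) = (if P then x else 0)"
  and mult_delta_right: "x * (if P then 1 else 0) = (if P then x else 0)"
  by simp_all

lemma sum_lessThan_mult_blocks: "(\<Sum>i<m*n. g i) = (\<Sum>b<m. \<Sum>r<n. g (b*n + r :: nat))"
proof -
  have "(\<Sum>r<n. g (b*n + r)) = sum g {b*n..<b*n+n}" for b
    using sum.shift_bounds_nat_ivl[of g 0 "b*n" n] by (simp add: atLeast0LessThan add.commute)
  then show ?thesis by (simp add: sum.nat_group)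
qed

lemma block_index_less: "b < m \<Longrightarrow> r < n \<Longrightarrow> b*n + r < m*(n::nat)"
  by (metis add.commute add_mult_distrib2 less_le_trans mult.commute mult_le_mono1
      nat_add_left_cancel_less Suc_le_eq mult_Suc)

lemma index_anc_state:
  "i < m*n \<Longrightarrow> j < m*n \<Longrightarrow> anc_state m n \<rho> $$ (i,j) = (if i < n \<and> j < n then \<rho> $$ (i,j) else 0)"
  by (simp add: anc_state_def)

lemma index_ptrace_B_dilation:
  assumes U: "U \<in> carrier_mat (m*n) (m*n)" and "m \<ge> 1" and a: "a < n" "a' < n"
  shows "ptrace_B m n (U * anc_state m n \<rho> * mat_adjoint U) $$ (a,a') =
    (\<Sum>b<m. \<Sum>p<n. \<Sum>q<n. U $$ (b*n+a,p) * \<rho> $$ (p,q) * cnj (U $$ (b*n+a',q)))"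
proof -
  have nN: "n \<le> m*n" using \<open>m \<ge> 1\<close> by simp
  have anc: "anc_state m n \<rho> \<in> carrier_mat (m*n) (m*n)" by (simp add: anc_state_def)
  have block: "(U * anc_state m n \<rho> * mat_adjoint U) $$ (b*n+a, b*n+a') =
      (\<Sum>q<n. \<Sum>p<n. U $$ (b*n+a,p) * \<rho> $$ (p,q) * cnj (U $$ (b*n+a',q)))" if b: "b < m" for b
  proof -
    let ?f = "\<lambda>q p. U $$ (b*n+a,p) * anc_state m n \<rho> $$ (p,q) * mat_adjoint U $$ (q, b*n+a')"
    have "(U * anc_state m n \<rho> * mat_adjoint U) $$ (b*n+a, b*n+a') = (\<Sum>q<m*n. \<Sum>p<m*n. ?f q p)"
      using b a by (intro index_mult_mat3[OF U anc mat_adjoint_carrier[OF U]] block_index_less) auto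
    also have "\<dots> = (\<Sum>q<n. \<Sum>p<m*n. ?f q p)"
      \<comment> \<open>the ancilla starts in its first basis vector, so only indices below n contribute\<close>
      using nN by (intro sum.mono_neutral_right) (auto simp: index_anc_state intro!: sum.neutral)
    also have "\<dots> = (\<Sum>q<n. \<Sum>p<n. ?f q p)"
      using nN by (intro sum.cong refl sum.mono_neutral_right) (auto simp: index_anc_state)
    also have "\<dots> = (\<Sum>q<n. \<Sum>p<n. U $$ (b*n+a,p) * \<rho> $$ (p,q) * cnj (U $$ (b*n+a',q)))"
    proof (intro sum.cong refl)
      fix q p assume "q \<in> {..<n}" "p \<in> {..<n}"
      moreover from this have "q < m*n" "p < m*n"
        using nN by (metis lessThan_iff order.strict_trans2)+
      ultimately show "?f q p = U $$ (b*n+a,p) * \<rho> $$ (p,q) * cnj (U $$ (b*n+a',q))"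
        using U b a by (simp add: index_anc_state block_index_less)
    qed
    finally show ?thesis .
  qed
  have "ptrace_B m n (U * anc_state m n \<rho> * mat_adjoint U) $$ (a,a') =
      (\<Sum>b<m. \<Sum>q<n. \<Sum>p<n. U $$ (b*n+a,p) * \<rho> $$ (p,q) * cnj (U $$ (b*n+a',q)))"
    using a by (simp add: ptrace_B_def block)
  also have "\<dots> = (\<Sum>b<m. \<Sum>p<n. \<Sum>q<n. U $$ (b*n+a,p) * \<rho> $$ (p,q) * cnj (U $$ (b*n+a',q)))"
    by (rule sum.cong[OF refl], rule sum.swap)
  finally show ?thesis .
qed

lemma index_kraus_channel:
  fixes K :: "nat \<Rightarrow> complex mat"
  assumes K: "\<forall>j<d. K j \<in> carrier_mat n n" and "\<rho> \<in> carrier_mat n n" and a: "a < n" "a' < n"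
  shows "kraus_channel n d K \<rho> $$ (a,a') =
    (\<Sum>j<d. \<Sum>p<n. \<Sum>q<n. K j $$ (a,p) * \<rho> $$ (p,q) * cnj (K j $$ (a',q)))"
proof -
  have "kraus_channel n d K \<rho> $$ (a,a') =
      (\<Sum>j<d. \<Sum>q<n. \<Sum>p<n. K j $$ (a,p) * \<rho> $$ (p,q) * mat_adjoint (K j) $$ (q,a'))"
    using assms unfolding kraus_channel_def
    by (auto intro!: sum.cong index_mult_mat3[of _ n n _ n _ n] mat_adjoint_carrier)
  also have "\<dots> = (\<Sum>j<d. \<Sum>p<n. \<Sum>q<n. K j $$ (a,p) * \<rho> $$ (p,q) * cnj (K j $$ (a',q)))"
    using K a by (subst sum.swap) (auto intro!: sum.cong)
  finally show ?thesis .
qed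

lemma kraus_completeness_index:
  fixes K :: "nat \<Rightarrow> complex mat"
  assumes K: "\<forall>j<d. K j \<in> carrier_mat n n"
    and C: "mat n n (\<lambda>(i, k). \<Sum>j<d. (mat_adjoint (K j) * K j) $$ (i, k)) = 1\<^sub>m n"
    and "a < n" "b < n"
  shows "(\<Sum>j<d. \<Sum>k<n. cnj (K j $$ (k,a)) * K j $$ (k,b)) = (if a = b then 1 else 0)"
proof -
  have "(\<Sum>j<d. (mat_adjoint (K j) * K j) $$ (a, b)) = (if a = b then 1 else 0)"
    using arg_cong[OF C, of "\<lambda>M. M $$ (a,b)"] \<open>a < n\<close> \<open>b < n\<close> by simp
  moreover have "(mat_adjoint (K j) * K j) $$ (a, b) = (\<Sum>k<n. cnj (K j $$ (k,a)) * K j $$ (k,b))"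
    if "j < d" for j
    using K that \<open>a < n\<close> \<open>b < n\<close> by (intro index_adjoint_mult_mat[of _ n n]) auto
  ultimately show ?thesis by simp
qed

section \<open>Kraus coefficients of a dilation\<close>

definition pure_state :: "nat \<Rightarrow> (nat \<Rightarrow> complex) \<Rightarrow> complex mat" where
  "pure_state n v = mat n n (\<lambda>(p,q). v p * cnj (v q))"

lemma density_mat_pure_state:
  assumes "(\<Sum>i<n. (cmod (v i))^2) = 1"
  shows "density_mat n (pure_state n v)"
proof -
  have "mat_trace (pure_state n v) = (\<Sum>i<n. v i * cnj (v i))"
    unfolding mat_trace_def pure_state_def by (intro sum.cong refl) auto
  also have "\<dots> = of_real (\<Sum>i<n. (cmod (v i))^2)"
    by (simp only: of_real_sum complex_norm_square)
  finally have tr: "mat_trace (pure_state n v) = 1"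
    using assms by simp
  have "conjugate w \<bullet> (pure_state n v *\<^sub>v w) = of_real ((cmod z)^2)"
    if "w \<in> carrier_vec n" "z = (\<Sum>j<n. cnj (v j) * w $ j)" for w z
  proof -
    have "conjugate w \<bullet> (pure_state n v *\<^sub>v w) = (\<Sum>i<n. cnj (w $ i) * (\<Sum>j<n. v i * cnj (v j) * w $ j))"
      using that by (simp add: scalar_prod_def pure_state_def atLeast0LessThan)
    also have "\<dots> = (\<Sum>i<n. cnj (w $ i) * v i) * z"
      using that by (simp add: sum_distrib_left sum_distrib_right mult.assoc mult.left_commute)
        (rule sum.swap)
    also have "(\<Sum>i<n. cnj (w $ i) * v i) = cnj z"
      using that by (simp add: mult.commute)
    finally show ?thesis by (simp only: complex_norm_square mult.commute)
  qed
  then show ?thesis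
    unfolding density_mat_def using tr by (auto simp: pure_state_def Let_def)
qed

definition sesq_form :: "nat \<Rightarrow> (nat \<Rightarrow> nat \<Rightarrow> complex) \<Rightarrow> (nat \<Rightarrow> complex) \<Rightarrow> complex" where
  "sesq_form n C v = (\<Sum>p<n. \<Sum>q<n. C p q * v p * cnj (v q))"

lemma sesq_form_supported:
  assumes "S \<subseteq> {..<n}" "\<And>k. k \<notin> S \<Longrightarrow> v k = 0"
  shows "sesq_form n C v = (\<Sum>p\<in>S. \<Sum>q\<in>S. C p q * v p * cnj (v q))"
proof -
  have "sesq_form n C v = (\<Sum>p\<in>S. \<Sum>q<n. C p q * v p * cnj (v q))"
    unfolding sesq_form_def using assms by (intro sum.mono_neutral_right) auto
  also have "\<dots> = (\<Sum>p\<in>S. \<Sum>q\<in>S. C p q * v p * cnj (v q))"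
    using assms by (intro sum.cong refl sum.mono_neutral_right) auto
  finally show ?thesis .
qed

lemma sesq_form_scale:
  "sesq_form n C (\<lambda>k. of_real r * v k) = of_real (r^2) * sesq_form n C v"
  by (simp add: sesq_form_def sum_distrib_left power2_eq_square algebra_simps)

lemma sesq_form_eq_0_if_eq_0_on_unit_vectors:
  assumes "\<And>v. (\<Sum>p<n. (cmod (v p))^2) = 1 \<Longrightarrow> sesq_form n C v = 0"
  shows "sesq_form n C v = 0"
proof (cases "(\<Sum>p<n. (cmod (v p))^2) = 0")
  case True
  then show ?thesis by (simp add: sesq_form_def sum_nonneg_eq_0_iff)
next
  case False
  define r where "r = 1 / sqrt (\<Sum>p<n. (cmod (v p))^2)"
  have "(\<Sum>p<n. (cmod (v p))^2) > 0"
    using False by (simp add: sum_nonneg order_le_neq_trans)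
  then have r: "r^2 * (\<Sum>p<n. (cmod (v p))^2) = 1"
    by (simp add: r_def power_divide)
  then have "sesq_form n C (\<lambda>k. of_real r * v k) = 0"
    by (intro assms) (simp add: norm_mult power_mult_distrib sum_distrib_left)
  moreover have "r \<noteq> 0" using r by auto
  ultimately show ?thesis by (simp add: sesq_form_scale)
qed

lemma sesq_form_eq_0_imp_coeff_eq_0:
  assumes "\<And>v. sesq_form n C v = 0" "p < n" "q < n"
  shows "C p q = 0"
proof -
  have pp: "C k k = 0" if "k < n" for k
  proof -
    have "sesq_form n C (\<lambda>i. if i = k then 1 else 0) = C k k"
      using that by (subst sesq_form_supported[of "{k}"]) auto
    then show ?thesis using assms(1) by simp
  qed
  show ?thesis
  proof (cases "p = q")
    case True
    then show ?thesis using pp assms by simp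
  next
    case False
    let ?v = "\<lambda>z k. if k = p then 1 else if k = q then z else 0"
    have two: "sesq_form n C (?v z) = C p q * cnj z + C q p * z" for z
      using assms False pp by (subst sesq_form_supported[of "{p,q}"]) auto
    have "C p q + C q p = 0" "- \<i> * C p q + \<i> * C q p = 0"
      using two[of 1] two[of \<i>] assms(1) by simp_all
    then show ?thesis by (simp add: algebra_simps)
  qed
qed

lemma sum_pure_state_eq_sesq_form:
  "(\<Sum>j<d. \<Sum>p<n. \<Sum>q<n. f j p * pure_state n v $$ (p,q) * g j q) =
     sesq_form n (\<lambda>p q. \<Sum>j<d. f j p * g j q) v"
proof -
  have "(\<Sum>j<d. \<Sum>p<n. \<Sum>q<n. f j p * pure_state n v $$ (p,q) * g j q) =
      (\<Sum>j<d. \<Sum>p<n. \<Sum>q<n. f j p * g j q * v p * cnj (v q))"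
    by (intro sum.cong refl) (simp add: pure_state_def algebra_simps)
  also have "\<dots> = (\<Sum>p<n. \<Sum>j<d. \<Sum>q<n. f j p * g j q * v p * cnj (v q))"
    by (rule sum.swap)
  also have "\<dots> = (\<Sum>p<n. \<Sum>q<n. \<Sum>j<d. f j p * g j q * v p * cnj (v q))"
    by (rule sum.cong[OF refl], rule sum.swap)
  finally show ?thesis
    by (simp add: sesq_form_def sum_distrib_right)
qed

lemma dilation_kraus_coeff:
  fixes K :: "nat \<Rightarrow> complex mat"
  assumes K: "\<forall>j<d. K j \<in> carrier_mat n n"
    and U: "U \<in> carrier_mat (m*n) (m*n)" and m: "m \<ge> 1"
    and dil: "\<forall>\<rho>. density_mat n \<rho> \<longrightarrow>
                kraus_channel n d K \<rho> = ptrace_B m n (U * anc_state m n \<rho> * mat_adjoint U)"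
    and a: "a < n" "a' < n" and "p < n" "q < n"
  shows "(\<Sum>j<d. K j $$ (a,p) * cnj (K j $$ (a',q))) =
         (\<Sum>b<m. U $$ (b*n+a,p) * cnj (U $$ (b*n+a',q)))"
proof -
  define C where "C p q = (\<Sum>j<d. K j $$ (a,p) * cnj (K j $$ (a',q))) -
      (\<Sum>b<m. U $$ (b*n+a,p) * cnj (U $$ (b*n+a',q)))" for p q
  have "sesq_form n C v = 0" if v: "(\<Sum>p<n. (cmod (v p))^2) = 1" for v
  proof -
    have car: "pure_state n v \<in> carrier_mat n n" by (simp add: pure_state_def)
    have "kraus_channel n d K (pure_state n v) $$ (a,a') =
        ptrace_B m n (U * anc_state m n (pure_state n v) * mat_adjoint U) $$ (a,a')"
      using dil density_mat_pure_state[OF v] by simp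
    then have "sesq_form n (\<lambda>p q. \<Sum>j<d. K j $$ (a,p) * cnj (K j $$ (a',q))) v =
        sesq_form n (\<lambda>p q. \<Sum>b<m. U $$ (b*n+a,p) * cnj (U $$ (b*n+a',q))) v"
      by (simp only: index_kraus_channel[OF K car a] index_ptrace_B_dilation[OF U m a]
          sum_pure_state_eq_sesq_form)
    then show ?thesis
      by (simp add: sesq_form_def C_def left_diff_distrib sum_subtractf)
  qed
  then have "C p q = 0"
    using sesq_form_eq_0_if_eq_0_on_unit_vectors sesq_form_eq_0_imp_coeff_eq_0 assms by metis
  then show ?thesis by (simp add: C_def)
qed

lemma dilation_corner_trace_bound:
  fixes K :: "nat \<Rightarrow> complex mat"
  assumes K: "\<forall>j<d. K j \<in> carrier_mat n n" and d: "d \<ge> 1"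
    and K0: "K 0 = \<alpha> \<cdot>\<^sub>m 1\<^sub>m n"
    and tr: "\<forall>j. 1 \<le> j \<and> j < d \<longrightarrow> mat_trace (K j) = 0"
    and U: "U \<in> carrier_mat (m*n) (m*n)" and m: "m \<ge> 1"
    and dil: "\<forall>\<rho>. density_mat n \<rho> \<longrightarrow>
                kraus_channel n d K \<rho> = ptrace_B m n (U * anc_state m n \<rho> * mat_adjoint U)"
  shows "cmod (\<Sum>p<n. U $$ (p,p)) \<le> real n * cmod \<alpha>"
proof -
  define t where "t b = (\<Sum>p<n. U $$ (b*n+p,p))" for b
  define T where "T j = (\<Sum>p<n. K j $$ (p,p))" for j
  have "(\<Sum>p<n. \<Sum>q<n. \<Sum>j<d. K j $$ (p,p) * cnj (K j $$ (q,q))) =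
      (\<Sum>p<n. \<Sum>q<n. \<Sum>b<m. U $$ (b*n+p,p) * cnj (U $$ (b*n+q,q)))"
    using dilation_kraus_coeff[OF K U m dil] by simp
  moreover have "(\<Sum>p<n. \<Sum>q<n. \<Sum>b<m. U $$ (b*n+p,p) * cnj (U $$ (b*n+q,q))) =
      (\<Sum>b<m. t b * cnj (t b))"
    by (simp add: t_def sum_distrib_left sum_distrib_right sum.swap[of _ "{..<m}"] mult.commute)
      (rule sum.cong[OF refl], rule sum.swap)
  moreover have "(\<Sum>p<n. \<Sum>q<n. \<Sum>j<d. K j $$ (p,p) * cnj (K j $$ (q,q))) =
      (\<Sum>j<d. T j * cnj (T j))"
    by (simp add: T_def sum_distrib_left sum_distrib_right sum.swap[of _ "{..<d}"] mult.commute)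
      (rule sum.cong[OF refl], rule sum.swap)
  ultimately have traces: "(\<Sum>b<m. t b * cnj (t b)) = (\<Sum>j<d. T j * cnj (T j))"
    by simp
  have "T j = mat_trace (K j)" if "j < d" for j
    using K that by (auto simp: mat_trace_def T_def)
  then have "(\<Sum>j<d. T j * cnj (T j)) = (\<Sum>j\<in>{0}. T j * cnj (T j))"
    using tr d by (intro sum.mono_neutral_right) auto
  also have "\<dots> = T 0 * cnj (T 0)" by simp
  also have "\<dots> = of_real ((cmod (T 0))^2)" by (simp only: complex_norm_square)
  finally have diag: "(\<Sum>j<d. T j * cnj (T j)) = of_real ((cmod (T 0))^2)" .
  have "T 0 = of_nat n * \<alpha>" by (simp add: T_def K0)
  then have "cmod (T 0) = real n * cmod \<alpha>" by (simp only: norm_mult norm_of_nat)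
  then have "(\<Sum>b<m. t b * cnj (t b)) = of_real ((real n * cmod \<alpha>)^2)"
    by (simp only: traces diag)
  then have "of_real (\<Sum>b<m. (cmod (t b))^2) = (of_real ((real n * cmod \<alpha>)^2) :: complex)"
    by (simp only: of_real_sum complex_norm_square)
  then have "(\<Sum>b<m. (cmod (t b))^2) = (real n * cmod \<alpha>)^2"
    by (simp only: of_real_eq_iff)
  moreover have "(cmod (t 0))^2 \<le> (\<Sum>b<m. (cmod (t b))^2)"
    using m by (intro member_le_sum) auto
  ultimately have "(cmod (t 0))^2 \<le> (real n * cmod \<alpha>)^2" by linarith
  then have "cmod (t 0) \<le> real n * cmod \<alpha>"
    by (rule power2_le_imp_le) simp
  then show ?thesis by (simp add: t_def)
qed

lemma norm_identity_kraus_le_1: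
  fixes K :: "nat \<Rightarrow> complex mat"
  assumes K: "\<forall>j<d. K j \<in> carrier_mat n n" and "n \<ge> 1" "d \<ge> 1"
    and C: "mat n n (\<lambda>(i, k). \<Sum>j<d. (mat_adjoint (K j) * K j) $$ (i, k)) = 1\<^sub>m n"
    and K0: "K 0 = \<alpha> \<cdot>\<^sub>m 1\<^sub>m n"
  shows "cmod \<alpha> \<le> 1"
proof -
  have "of_real (\<Sum>j<d. \<Sum>k<n. (cmod (K j $$ (k,0)))^2) =
      (\<Sum>j<d. \<Sum>k<n. cnj (K j $$ (k,0)) * K j $$ (k,0))"
    by (simp only: of_real_sum complex_norm_square mult.commute)
  also have "\<dots> = 1"
    using kraus_completeness_index[OF K C, of 0 0] \<open>n \<ge> 1\<close> by simp
  finally have column: "(\<Sum>j<d. \<Sum>k<n. (cmod (K j $$ (k,0)))^2) = 1"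
    by (simp only: of_real_eq_1_iff)
  have "(cmod \<alpha>)^2 = (cmod (K 0 $$ (0,0)))^2" using \<open>n \<ge> 1\<close> K0 by simp
  also have "\<dots> \<le> (\<Sum>k<n. (cmod (K 0 $$ (k,0)))^2)"
    using \<open>n \<ge> 1\<close> by (intro member_le_sum) auto
  also have "\<dots> \<le> (\<Sum>j<d. \<Sum>k<n. (cmod (K j $$ (k,0)))^2)"
    using \<open>d \<ge> 1\<close>
    by (intro member_le_sum[of 0 "{..<d}" "\<lambda>j. \<Sum>k<n. (cmod (K j $$ (k,0)))^2"] sum_nonneg) auto
  finally have "(cmod \<alpha>)^2 \<le> 1" using column by simp
  then show ?thesis by (simp add: power_le_one_iff abs_le_square_iff)
qed

section \<open>Numerical range of a unitary matrix\<close>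

text \<open>Matrices and vectors as plain functions of their indices, of which only those below N matter:
  this keeps the deflation induction below free of dimension bookkeeping.\<close>

definition fmat_vec :: "nat \<Rightarrow> (nat \<Rightarrow> nat \<Rightarrow> complex) \<Rightarrow> (nat \<Rightarrow> complex) \<Rightarrow> nat \<Rightarrow> complex" where
  "fmat_vec N A v = (\<lambda>i. \<Sum>j<N. A i j * v j)"
definition finner :: "nat \<Rightarrow> (nat \<Rightarrow> complex) \<Rightarrow> (nat \<Rightarrow> complex) \<Rightarrow> complex" where
  "finner N v w = (\<Sum>i<N. cnj (v i) * w i)"
definition fmat_mult :: "nat \<Rightarrow> (nat \<Rightarrow> nat \<Rightarrow> complex) \<Rightarrow> (nat \<Rightarrow> nat \<Rightarrow> complex) \<Rightarrow> nat \<Rightarrow> nat \<Rightarrow> complex" where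
  "fmat_mult N A B = (\<lambda>i j. \<Sum>k<N. A i k * B k j)"
definition fisometry :: "nat \<Rightarrow> (nat \<Rightarrow> nat \<Rightarrow> complex) \<Rightarrow> bool" where
  "fisometry N A \<longleftrightarrow> (\<forall>v w. finner N (fmat_vec N A v) (fmat_vec N A w) = finner N v w)"
definition feigenvalue :: "nat \<Rightarrow> (nat \<Rightarrow> nat \<Rightarrow> complex) \<Rightarrow> complex \<Rightarrow> bool" where
  "feigenvalue N A l \<longleftrightarrow> (\<exists>v. (\<exists>i<N. v i \<noteq> 0) \<and> (\<forall>i<N. fmat_vec N A v i = l * v i))"

lemma fmat_vec_fmat_mult: "fmat_vec N (fmat_mult N A B) v = fmat_vec N A (fmat_vec N B v)"
proof (rule ext)
  fix i
  have "fmat_vec N (fmat_mult N A B) v i = (\<Sum>j<N. \<Sum>k<N. A i k * (B k j * v j))"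
    unfolding fmat_vec_def fmat_mult_def by (simp add: sum_distrib_right mult.assoc)
  also have "\<dots> = (\<Sum>k<N. \<Sum>j<N. A i k * (B k j * v j))" by (rule sum.swap)
  also have "\<dots> = fmat_vec N A (fmat_vec N B v) i"
    unfolding fmat_vec_def by (simp add: sum_distrib_left)
  finally show "fmat_vec N (fmat_mult N A B) v i = fmat_vec N A (fmat_vec N B v) i" .
qed

lemma fmat_vec_cong: "(\<And>i. i < N \<Longrightarrow> v i = w i) \<Longrightarrow> fmat_vec N A v = fmat_vec N A w"
  unfolding fmat_vec_def by (intro ext sum.cong) auto

lemma finner_cong: "(\<And>i. i < N \<Longrightarrow> v i = v' i) \<Longrightarrow> (\<And>i. i < N \<Longrightarrow> w i = w' i) \<Longrightarrow> finner N v w = finner N v' w'"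
  unfolding finner_def by (intro sum.cong) auto

lemma finner_basis_left:
  assumes "p < N"
  shows "finner N (\<lambda>i. if i = p then 1 else 0) w = w p"
proof -
  have "finner N (\<lambda>i. if i = p then 1 else 0) w = (\<Sum>i<N. if i = p then w i else 0)"
    unfolding finner_def by (intro sum.cong) auto
  with assms show ?thesis by simp
qed

lemma fmat_vec_basis:
  assumes "p < N"
  shows "fmat_vec N A (\<lambda>j. if j = p then 1 else 0) i = A i p"
proof -
  have "fmat_vec N A (\<lambda>j. if j = p then 1 else 0) i = (\<Sum>j<N. if j = p then A i j else 0)"
    unfolding fmat_vec_def by (intro sum.cong) auto
  with assms show ?thesis by simp
qed

lemma finner_self: "finner N v v = of_real (\<Sum>i<N. (cmod (v i))^2)"
  unfolding finner_def of_real_sum by (intro sum.cong refl) (metis complex_norm_square mult.commute norm_complex_def)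

lemma cnj_finner: "cnj (finner N v w) = finner N w v"
  unfolding finner_def by (simp add: mult.commute)

lemma finner_diff_scale_right: "finner N v (\<lambda>i. w i - k * z i) = finner N v w - k * finner N v z"
  unfolding finner_def by (simp add: algebra_simps sum_subtractf sum_distrib_left)

lemma finner_scale_right: "finner N v (\<lambda>i. k * z i) = k * finner N v z"
  unfolding finner_def by (simp add: algebra_simps sum_distrib_left)

lemma finner_diff_scale_left: "finner N (\<lambda>i. w i - k * z i) v = finner N w v - cnj k * finner N z v"
  unfolding finner_def by (simp add: algebra_simps sum_subtractf sum_distrib_left)

lemma fmat_vec_scale: "fmat_vec N A (\<lambda>i. c * v i) i = c * fmat_vec N A v i"
  unfolding fmat_vec_def by (simp add: sum_distrib_left algebra_simps)

lemma finner_Suc: "finner (Suc M) w w' = cnj (w 0) * w' 0 + finner M (\<lambda>k. w (Suc k)) (\<lambda>k. w' (Suc k))"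
  unfolding finner_def by (simp only: sum.lessThan_Suc_shift)

lemma fmat_vec_Suc: "fmat_vec (Suc M) B w i = B i 0 * w 0 + (\<Sum>j<M. B i (Suc j) * w (Suc j))"
  unfolding fmat_vec_def by (simp only: sum.lessThan_Suc_shift)

lemma eigenvalue_iff_feigenvalue:
  assumes "U \<in> carrier_mat N N"
  shows "eigenvalue U l \<longleftrightarrow> feigenvalue N (\<lambda>i j. U $$ (i,j)) l"
proof
  assume "eigenvalue U l"
  then obtain w where "eigenvector U w l" by (auto simp: eigenvalue_def)
  then have wc: "w \<in> carrier_vec N" "w \<noteq> 0\<^sub>v N" "U *\<^sub>v w = l \<cdot>\<^sub>v w" using assms by (auto simp: eigenvector_def)
  have "\<exists>i<N. w $ i \<noteq> 0"
  proof (rule ccontr)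
    assume "\<not> ?thesis"
    then have "w = 0\<^sub>v N" using wc(1) by (intro eq_vecI) auto
    with wc(2) show False by simp
  qed
  moreover have "fmat_vec N (\<lambda>i j. U $$ (i,j)) (\<lambda>i. w $ i) i = l * w $ i" if i: "i < N" for i
  proof -
    have "(U *\<^sub>v w) $ i = l * w $ i" using wc i by simp
    moreover have "(U *\<^sub>v w) $ i = (\<Sum>j<N. U $$ (i,j) * w $ j)"
      using assms wc(1) i by (auto simp: scalar_prod_def atLeast0LessThan)
    ultimately show ?thesis by (simp add: fmat_vec_def)
  qed
  ultimately show "feigenvalue N (\<lambda>i j. U $$ (i,j)) l" unfolding feigenvalue_def by blast
next
  assume "feigenvalue N (\<lambda>i j. U $$ (i,j)) l"
  then obtain v where v: "\<exists>i<N. v i \<noteq> 0" "\<forall>i<N. fmat_vec N (\<lambda>i j. U $$ (i,j)) v i = l * v i"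
    unfolding feigenvalue_def by blast
  define w where "w = vec N v"
  have "w \<in> carrier_vec N" by (simp add: w_def)
  moreover have "w \<noteq> 0\<^sub>v N"
  proof
    assume "w = 0\<^sub>v N"
    then have "\<forall>i<N. v i = 0" unfolding w_def by (metis index_vec index_zero_vec(1))
    with v(1) show False by blast
  qed
  moreover have "U *\<^sub>v w = l \<cdot>\<^sub>v w"
  proof (rule eq_vecI)
    fix i assume "i < dim_vec (l \<cdot>\<^sub>v w)"
    then have i: "i < N" by (simp add: w_def)
    have "(U *\<^sub>v w) $ i = (\<Sum>j<N. U $$ (i,j) * v j)"
      using assms i by (auto simp: scalar_prod_def atLeast0LessThan w_def)
    also have "\<dots> = l * v i" using v(2) i by (simp add: fmat_vec_def)
    finally show "(U *\<^sub>v w) $ i = (l \<cdot>\<^sub>v w) $ i" using i by (simp add: w_def)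
  qed (use assms in \<open>simp add: w_def\<close>)
  ultimately have "eigenvector U w l" using assms by (auto simp: eigenvector_def)
  then show "eigenvalue U l" by (auto simp: eigenvalue_def)
qed

lemma feigenvalue_exists: "N > 0 \<Longrightarrow> \<exists>l. feigenvalue N A l"
proof -
  assume N: "N > 0"
  let ?M = "mat N N (\<lambda>(i,j). A i j)"
  have M: "?M \<in> carrier_mat N N" by simp
  from spectrum_non_empty[OF M N] obtain l where "eigenvalue ?M l" by (auto simp: spectrum_def)
  then have "feigenvalue N (\<lambda>i j. ?M $$ (i,j)) l" using eigenvalue_iff_feigenvalue[OF M] by blast
  then obtain v where v: "\<exists>i<N. v i \<noteq> 0" "\<forall>i<N. fmat_vec N (\<lambda>i j. ?M $$ (i,j)) v i = l * v i"
    unfolding feigenvalue_def by blast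
  have "fmat_vec N (\<lambda>i j. ?M $$ (i,j)) v i = fmat_vec N A v i" if "i < N" for i
    using that by (simp add: fmat_vec_def)
  then have "\<forall>i<N. fmat_vec N A v i = l * v i" using v(2) by simp
  then show ?thesis using v(1) unfolding feigenvalue_def by blast
qed

text \<open>Reflection in the hyperplane orthogonal to u; for \<open>u = 0\<close> the division by zero makes it
  the identity.\<close>

definition householder :: "nat \<Rightarrow> (nat \<Rightarrow> complex) \<Rightarrow> (nat \<Rightarrow> complex) \<Rightarrow> nat \<Rightarrow> complex" where
  "householder N u v = (\<lambda>i. v i - (2 / finner N u u) * u i * finner N u v)"
definition householder_mat :: "nat \<Rightarrow> (nat \<Rightarrow> complex) \<Rightarrow> nat \<Rightarrow> nat \<Rightarrow> complex" where
  "householder_mat N u = (\<lambda>i j. (if i = j then 1 else 0) - (2 / finner N u u) * u i * cnj (u j))"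

lemma fmat_vec_householder_mat:
  "i < N \<Longrightarrow> fmat_vec N (householder_mat N u) v i = householder N u v i"
  unfolding fmat_vec_def householder_mat_def householder_def finner_def
  by (simp add: left_diff_distrib sum_subtractf mult_delta_left sum_distrib_left mult.assoc)

lemma householder_cong: "(\<And>i. i < N \<Longrightarrow> v i = w i) \<Longrightarrow> i < N \<Longrightarrow> householder N u v i = householder N u w i"
  unfolding householder_def using finner_cong[of N u u v w] by simp

lemma householder_alt: "householder N u v = (\<lambda>i. v i - ((2 / finner N u u) * finner N u v) * u i)"
  unfolding householder_def by (simp add: algebra_simps)

lemma householder_householder: "householder N u (householder N u v) i = v i"
proof -
  define q where "q = finner N u u"
  define c where "c = 2 / q"
  define a where "a = finner N u v"
  have e: "finner N u (householder N u v) = a - (c * a) * q"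
    unfolding householder_alt finner_diff_scale_right a_def c_def q_def ..
  show ?thesis
  proof (cases "q = 0")
    case True
    then show ?thesis by (simp add: householder_def q_def)
  next
    case False
    then have "c * q = 2" by (simp add: c_def)
    then have "finner N u (householder N u v) = - a" unfolding e by (simp add: algebra_simps)
    then show ?thesis unfolding householder_def[of N u "householder N u v"]
      by (simp add: householder_def a_def[symmetric] q_def[symmetric] c_def[symmetric] algebra_simps)
  qed
qed

lemma finner_householder_left: "finner N (householder N u v) w = finner N v (householder N u w)"
proof -
  let ?q = "finner N u u"
  have c: "cnj (2 / ?q) = 2 / ?q" by (simp add: cnj_finner)
  have "finner N (householder N u v) w = finner N v w - cnj ((2 / ?q) * finner N u v) * finner N u w"
    unfolding householder_def using finner_diff_scale_left[of N v "(2 / ?q) * finner N u v" u w] by (simp add: algebra_simps)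
  also have "\<dots> = finner N v w - (2 / ?q) * finner N v u * finner N u w"
    by (simp only: complex_cnj_mult c cnj_finner mult.assoc)
  also have "\<dots> = finner N v (householder N u w)"
    unfolding householder_def using finner_diff_scale_right[of N v w "(2 / ?q) * finner N u w" u] by (simp add: algebra_simps)
  finally show ?thesis .
qed

lemma finner_householder: "finner N (householder N u v) (householder N u w) = finner N v w"
  using finner_householder_left[of N u v "householder N u w"] finner_cong[of N v v "householder N u (householder N u w)" w] householder_householder[of N u w] by simp

lemma householder_zero: "householder N u (\<lambda>_. 0) i = 0"
  unfolding householder_def finner_def by simp

lemma householder_scale: "householder N u (\<lambda>i. l * v i) i = l * householder N u v i"
  unfolding householder_def by (simp add: finner_scale_right algebra_simps)
lemma householder_to_unit_vector:
  assumes x: "finner N x x = 1" and N: "N > 0"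
  defines "p \<equiv> (if x 0 = 0 then 1 else x 0 / of_real (cmod (x 0)))"
  defines "f \<equiv> (\<lambda>k. if k = 0 then p else (0::complex))"
  defines "u \<equiv> (\<lambda>k. x k - f k)"
  shows "i < N \<Longrightarrow> householder N u f i = x i" and "p \<noteq> 0"
proof -
  have cmp: "cmod p = 1" by (cases "x 0 = 0") (auto simp: p_def norm_divide)
  have cp: "cnj p * p = 1"
    using complex_norm_square[of p] cmp by (simp add: mult.commute)
  show "p \<noteq> 0" using cp by auto
  define r where "r = cnj (x 0) * p"
  have rr: "r = of_real (cmod (x 0))"
  proof (cases "x 0 = 0")
    case True then show ?thesis by (simp add: r_def p_def)
  next
    case False
    then have "r = cnj (x 0) * x 0 / of_real (cmod (x 0))" by (simp add: r_def p_def)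
    also have "\<dots> = of_real ((cmod (x 0))^2) / of_real (cmod (x 0))"
      by (metis complex_norm_square mult.commute norm_complex_def)
    also have "\<dots> = of_real (cmod (x 0))" using False by (simp add: power2_eq_square)
    finally show ?thesis .
  qed
  have ipf: "finner N u f = r - 1"
  proof -
    have "finner N u f = (\<Sum>k<N. if k = 0 then cnj (u 0) * p else 0)"
      unfolding finner_def by (intro sum.cong) (auto simp: f_def)
    also have "\<dots> = cnj (u 0) * p" using N by simp
    also have "\<dots> = r - 1" using cp by (simp add: u_def f_def r_def algebra_simps)
    finally show ?thesis .
  qed
  have ipxf: "finner N x f = r" 
  proof -
    have "finner N x f = (\<Sum>k<N. if k = 0 then cnj (x 0) * p else 0)"
      unfolding finner_def by (intro sum.cong) (auto simp: f_def)
    also have "\<dots> = r" using N by (simp add: r_def)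
    finally show ?thesis .
  qed
  have ipff: "finner N f f = 1"
  proof -
    have "finner N f f = (\<Sum>k<N. if k = 0 then cnj p * p else 0)"
      unfolding finner_def by (intro sum.cong) (auto simp: f_def)
    also have "\<dots> = 1" using N cp by simp
    finally show ?thesis .
  qed
  have rcnj: "cnj r = r" by (simp add: rr)
  have ipfx: "finner N f x = r" using ipxf cnj_finner[of N x f] rcnj by metis
  have q: "finner N u u = 2 - 2 * r"
  proof -
    have "finner N u u = finner N x x - finner N x f - finner N f x + finner N f f"
      unfolding finner_def u_def by (simp add: algebra_simps sum_subtractf sum.distrib)
    then show ?thesis using x ipxf ipfx ipff by simp
  qed
  assume i: "i < N"
  show "householder N u f i = x i"
  proof (cases "r = 1")
    case False
    then have "2 - 2 * r \<noteq> 0" by simp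
    then have "(2 / finner N u u) * finner N u f = - 1" unfolding q ipf
      by (simp add: field_simps)
    then show ?thesis unfolding householder_alt by (simp add: u_def)
  next
    case True
    then have "finner N u u = 0" using q by simp
    then have "complex_of_real (\<Sum>k<N. (cmod (u k))^2) = 0" using finner_self[of N u] by metis
    then have "(\<Sum>k<N. (cmod (u k))^2) = 0" by (simp only: of_real_eq_0_iff)
    then have "\<forall>k<N. u k = 0" by (simp add: sum_nonneg_eq_0_iff)
    then have "x i = f i" using i by (simp add: u_def)
    then show ?thesis by (simp add: householder_def \<open>finner N u u = 0\<close>)
  qed
qed

lemma sum_norm_power2_pos:
  fixes v :: "nat \<Rightarrow> complex"
  shows "i < N \<Longrightarrow> v i \<noteq> 0 \<Longrightarrow> (\<Sum>i<N. (cmod (v i))^2) > 0"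
  by (rule sum_pos2[of "{..<N}" i]) auto

lemma feigenvalue_unit_eigenvector:
  assumes "feigenvalue N A l"
  obtains x where "finner N x x = 1" "\<And>i. i < N \<Longrightarrow> fmat_vec N A x i = l * x i"
proof -
  obtain y where y: "\<exists>i<N. y i \<noteq> 0" "\<forall>i<N. fmat_vec N A y i = l * y i"
    using assms unfolding feigenvalue_def by blast
  define r where "r = 1 / sqrt (\<Sum>i<N. (cmod (y i))^2)"
  have "(\<Sum>i<N. (cmod (y i))^2) > 0"
    using y(1) sum_norm_power2_pos by blast
  moreover have "(\<Sum>i<N. (cmod (of_real r * y i))^2) = r^2 * (\<Sum>i<N. (cmod (y i))^2)"
    by (simp add: norm_mult power_mult_distrib sum_distrib_left)
  ultimately have "(\<Sum>i<N. (cmod (of_real r * y i))^2) = 1"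
    by (simp add: r_def power_divide)
  then have "finner N (\<lambda>i. of_real r * y i) (\<lambda>i. of_real r * y i) = 1"
    by (simp only: finner_self of_real_1)
  moreover have "fmat_vec N A (\<lambda>i. of_real r * y i) i = l * (of_real r * y i)" if "i < N" for i
    using y(2) that by (simp add: fmat_vec_scale)
  ultimately show ?thesis using that by blast
qed

definition householder_conj ::
    "nat \<Rightarrow> (nat \<Rightarrow> complex) \<Rightarrow> (nat \<Rightarrow> nat \<Rightarrow> complex) \<Rightarrow> nat \<Rightarrow> nat \<Rightarrow> complex" where
  "householder_conj N u A = fmat_mult N (householder_mat N u) (fmat_mult N A (householder_mat N u))"

lemma fmat_vec_householder_conj:
  assumes "i < N"
  shows "fmat_vec N (householder_conj N u A) v i = householder N u (fmat_vec N A (householder N u v)) i"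
proof -
  have "fmat_vec N A (fmat_vec N (householder_mat N u) v) = fmat_vec N A (householder N u v)"
    by (rule fmat_vec_cong) (rule fmat_vec_householder_mat)
  then show ?thesis
    using assms by (simp add: householder_conj_def fmat_vec_fmat_mult fmat_vec_householder_mat)
qed

lemma fisometry_householder_conj:
  assumes "fisometry N A"
  shows "fisometry N (householder_conj N u A)"
  unfolding fisometry_def
proof (intro allI)
  fix v w
  have "finner N (fmat_vec N (householder_conj N u A) v) (fmat_vec N (householder_conj N u A) w) =
      finner N (householder N u (fmat_vec N A (householder N u v)))
        (householder N u (fmat_vec N A (householder N u w)))"
    by (rule finner_cong) (simp_all add: fmat_vec_householder_conj)
  also have "\<dots> = finner N v w"
    using assms by (simp add: finner_householder fisometry_def)
  finally show "finner N (fmat_vec N (householder_conj N u A) v)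
      (fmat_vec N (householder_conj N u A) w) = finner N v w" .
qed

lemma feigenvalue_householder_conj:
  assumes "feigenvalue N (householder_conj N u A) \<mu>"
  shows "feigenvalue N A \<mu>"
proof -
  obtain z where z: "\<exists>i<N. z i \<noteq> 0" "\<forall>i<N. fmat_vec N (householder_conj N u A) z i = \<mu> * z i"
    using assms unfolding feigenvalue_def by blast
  define w where "w = householder N u z"
  have "fmat_vec N A w i = \<mu> * w i" if i: "i < N" for i
  proof -
    have "householder N u (fmat_vec N (householder_conj N u A) z) i =
        householder N u (householder N u (fmat_vec N A w)) i"
      using i by (intro householder_cong) (simp_all add: fmat_vec_householder_conj w_def)
    then have "fmat_vec N A w i = householder N u (fmat_vec N (householder_conj N u A) z) i"
      by (simp add: householder_householder)
    also have "\<dots> = householder N u (\<lambda>j. \<mu> * z j) i"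
      using i z(2) by (intro householder_cong) simp_all
    also have "\<dots> = \<mu> * w i" by (simp add: householder_scale w_def)
    finally show ?thesis .
  qed
  moreover have "\<exists>i<N. w i \<noteq> 0"
  proof (rule ccontr)
    assume "\<not> (\<exists>i<N. w i \<noteq> 0)"
    then have "householder N u w i = householder N u (\<lambda>_. 0) i" if "i < N" for i
      using that by (intro householder_cong) auto
    then have "\<forall>i<N. z i = 0"
      by (simp add: w_def householder_householder householder_zero)
    then show False using z(1) by blast
  qed
  ultimately show ?thesis unfolding feigenvalue_def by blast
qed

lemma finner_householder_conj:
  "finner N v (fmat_vec N A v) =
     finner N (householder N u v) (fmat_vec N (householder_conj N u A) (householder N u v))"
proof -
  have "finner N (householder N u v) (fmat_vec N (householder_conj N u A) (householder N u v)) =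
      finner N (householder N u v) (householder N u (fmat_vec N A v))"
  proof (rule finner_cong)
    fix i assume "i < N"
    moreover have "fmat_vec N A (householder N u (householder N u v)) = fmat_vec N A v"
      by (rule fmat_vec_cong) (simp add: householder_householder)
    ultimately show "fmat_vec N (householder_conj N u A) (householder N u v) i =
        householder N u (fmat_vec N A v) i"
      by (simp add: fmat_vec_householder_conj)
  qed simp
  then show ?thesis by (simp add: finner_householder)
qed

definition deflate :: "(nat \<Rightarrow> nat \<Rightarrow> complex) \<Rightarrow> nat \<Rightarrow> nat \<Rightarrow> complex" where
  "deflate B = (\<lambda>i j. B (Suc i) (Suc j))"

lemma fisometry_first_column:
  assumes iso: "fisometry (Suc M) B" and col: "\<And>i. i < Suc M \<Longrightarrow> B i 0 = (if i = 0 then l else 0)"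
  shows "cnj l * l = 1" and "\<And>k. 0 < k \<Longrightarrow> k < Suc M \<Longrightarrow> B 0 k = 0"
proof -
  let ?e = "\<lambda>k j::nat. if j = k then 1 else (0::complex)"
  have Be0: "fmat_vec (Suc M) B (?e 0) i = (if i = 0 then l else 0)" if "i < Suc M" for i
    using col[OF that] by (simp add: fmat_vec_basis)
  have e0: "finner (Suc M) (fmat_vec (Suc M) B (?e 0)) w = cnj l * w 0" for w
  proof -
    have "finner (Suc M) (fmat_vec (Suc M) B (?e 0)) w = (\<Sum>i<Suc M. if i = 0 then cnj l * w 0 else 0)"
      unfolding finner_def by (intro sum.cong) (auto simp: Be0)
    then show ?thesis by simp
  qed
  have "cnj l * fmat_vec (Suc M) B (?e k) 0 = finner (Suc M) (?e 0) (?e k)" for k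
    using iso by (simp add: fisometry_def flip: e0)
  moreover have "finner (Suc M) (?e 0) (?e k) = (\<Sum>i<Suc M. if i = 0 then ?e k 0 else 0)" for k
    unfolding finner_def by (intro sum.cong) auto
  ultimately have ortho: "cnj l * fmat_vec (Suc M) B (?e k) 0 = (if k = 0 then 1 else 0)" for k
    by simp
  show "cnj l * l = 1" using ortho[of 0] Be0[of 0] by simp
  then have "l \<noteq> 0" by auto
  fix k assume "0 < k" "k < Suc M"
  moreover have "fmat_vec (Suc M) B (?e k) 0 = B 0 k"
    using \<open>k < Suc M\<close> by (rule fmat_vec_basis)
  ultimately show "B 0 k = 0" using ortho[of k] \<open>l \<noteq> 0\<close> by simp
qed

lemma fmat_vec_shift_deflate:
  assumes "\<And>k. k < M \<Longrightarrow> B 0 (Suc k) = 0"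
  shows "fmat_vec (Suc M) B (\<lambda>k. if k = 0 then 0 else y (k - 1)) i =
    (if i = 0 then 0 else fmat_vec M (deflate B) y (i - 1))"
  unfolding fmat_vec_Suc using assms by (cases i) (simp_all add: deflate_def fmat_vec_def)

lemma fisometry_deflate:
  assumes iso: "fisometry (Suc M) B" and row: "\<And>k. k < M \<Longrightarrow> B 0 (Suc k) = 0"
  shows "fisometry M (deflate B)"
  unfolding fisometry_def
proof (intro allI)
  fix y y'
  let ?s = "\<lambda>y k. if k = 0 then 0 else y (k - 1)"
  have "finner M (fmat_vec M (deflate B) y) (fmat_vec M (deflate B) y') =
      finner (Suc M) (fmat_vec (Suc M) B (?s y)) (fmat_vec (Suc M) B (?s y'))"
    unfolding finner_Suc by (simp add: fmat_vec_shift_deflate[of M B, OF row])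
  also have "\<dots> = finner (Suc M) (?s y) (?s y')"
    using iso by (simp add: fisometry_def)
  also have "\<dots> = finner M y y'"
    unfolding finner_Suc by simp
  finally show "finner M (fmat_vec M (deflate B) y) (fmat_vec M (deflate B) y') = finner M y y'" .
qed

lemma feigenvalue_deflate:
  assumes row: "\<And>k. k < M \<Longrightarrow> B 0 (Suc k) = 0" and "feigenvalue M (deflate B) \<mu>"
  shows "feigenvalue (Suc M) B \<mu>"
proof -
  obtain y where y: "\<exists>i<M. y i \<noteq> 0" "\<forall>i<M. fmat_vec M (deflate B) y i = \<mu> * y i"
    using assms(2) unfolding feigenvalue_def by blast
  let ?z = "\<lambda>k. if k = 0 then 0 else y (k - 1)"
  have ev: "\<forall>i<Suc M. fmat_vec (Suc M) B ?z i = \<mu> * ?z i"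
  proof (intro allI impI)
    fix i assume "i < Suc M"
    then show "fmat_vec (Suc M) B ?z i = \<mu> * ?z i"
      using y(2) by (cases i) (simp_all add: fmat_vec_shift_deflate[of M B, OF row])
  qed
  obtain j where "j < M" "y j \<noteq> 0" using y(1) by blast
  then have "\<exists>i<Suc M. ?z i \<noteq> 0" by (intro exI[of _ "Suc j"]) simp
  with ev show ?thesis unfolding feigenvalue_def by (intro exI[of _ ?z] conjI)
qed

lemma finner_fmat_vec_deflate:
  assumes col: "\<And>i. i < Suc M \<Longrightarrow> B i 0 = (if i = 0 then l else 0)"
    and row: "\<And>k. k < M \<Longrightarrow> B 0 (Suc k) = 0"
  shows "finner (Suc M) w (fmat_vec (Suc M) B w) =
    l * (cnj (w 0) * w 0) + finner M (\<lambda>k. w (Suc k)) (fmat_vec M (deflate B) (\<lambda>k. w (Suc k)))"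
proof -
  have "fmat_vec (Suc M) B w 0 = l * w 0"
    using col[of 0] row by (simp add: fmat_vec_Suc)
  moreover have "finner M (\<lambda>k. w (Suc k)) (\<lambda>k. fmat_vec (Suc M) B w (Suc k)) =
      finner M (\<lambda>k. w (Suc k)) (fmat_vec M (deflate B) (\<lambda>k. w (Suc k)))"
  proof (rule finner_cong)
    fix k assume "k < M"
    then show "fmat_vec (Suc M) B w (Suc k) = fmat_vec M (deflate B) (\<lambda>k. w (Suc k)) k"
      using col[of "Suc k"] unfolding fmat_vec_Suc by (simp add: deflate_def fmat_vec_def)
  qed simp
  ultimately show ?thesis
    unfolding finner_Suc by (simp add: algebra_simps)
qed

text \<open>Schur's argument: conjugating by a Householder reflection moves a unit eigenvector to the
  first basis vector, which splits off a 1 \<open>\<times>\<close> 1 block of an isometry.\<close>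
lemma fisometry_numerical_range:
  assumes "fisometry N A" and "\<And>l. feigenvalue N A l \<Longrightarrow> \<gamma> \<le> Re l"
  shows "\<gamma> * (\<Sum>i<N. (cmod (v i))^2) \<le> Re (finner N v (fmat_vec N A v))"
  using assms
proof (induction N arbitrary: A v)
  case 0
  then show ?case by (simp add: finner_def)
next
  case (Suc M)
  obtain l where l: "feigenvalue (Suc M) A l"
    using feigenvalue_exists by blast
  obtain x where x: "finner (Suc M) x x = 1" "\<And>i. i < Suc M \<Longrightarrow> fmat_vec (Suc M) A x i = l * x i"
    using feigenvalue_unit_eigenvector[OF l] by blast
  define p where "p = (if x 0 = 0 then 1 else x 0 / of_real (cmod (x 0)))"
  define f where "f = (\<lambda>k::nat. if k = 0 then p else 0)"
  define u where "u = (\<lambda>k. x k - f k)"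
  have Hf: "\<And>i. i < Suc M \<Longrightarrow> householder (Suc M) u f i = x i" and "p \<noteq> 0"
    using householder_to_unit_vector[OF x(1)] unfolding p_def f_def u_def by auto
  define B where "B = householder_conj (Suc M) u A"
  have iso: "fisometry (Suc M) B"
    using Suc.prems(1) by (simp add: B_def fisometry_householder_conj)
  have col: "B i 0 = (if i = 0 then l else 0)" if i: "i < Suc M" for i
  proof -
    have "fmat_vec (Suc M) A (householder (Suc M) u f) = fmat_vec (Suc M) A x"
      by (rule fmat_vec_cong) (rule Hf)
    then have "fmat_vec (Suc M) B f i = householder (Suc M) u (fmat_vec (Suc M) A x) i"
      using i by (simp add: B_def fmat_vec_householder_conj)
    also have "\<dots> = householder (Suc M) u (\<lambda>j. l * householder (Suc M) u f j) i"
      using i by (intro householder_cong) (simp_all add: x(2) Hf)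
    also have "\<dots> = l * f i" by (simp add: householder_scale householder_householder)
    finally have "B i 0 * p = l * f i"
      by (simp add: fmat_vec_def f_def if_distrib sum.delta' cong: if_cong)
    then show ?thesis using \<open>p \<noteq> 0\<close> by (auto simp: f_def)
  qed
  have row: "B 0 (Suc k) = 0" if "k < M" for k
    using fisometry_first_column(2)[OF iso col] that by simp
  have IH: "\<gamma> * (\<Sum>i<M. (cmod (y i))^2) \<le> Re (finner M y (fmat_vec M (deflate B) y))" for y
  proof (rule Suc.IH)
    show "fisometry M (deflate B)" using iso row by (rule fisometry_deflate)
    show "\<gamma> \<le> Re \<mu>" if "feigenvalue M (deflate B) \<mu>" for \<mu>
      using feigenvalue_deflate[OF row that] Suc.prems(2)
      by (simp add: B_def feigenvalue_householder_conj)
  qed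
  define w where "w = householder (Suc M) u v"
  have "Re (finner (Suc M) v (fmat_vec (Suc M) A v)) = Re (finner (Suc M) w (fmat_vec (Suc M) B w))"
    by (simp add: w_def B_def flip: finner_householder_conj)
  also have "\<dots> = (cmod (w 0))^2 * Re l + Re (finner M (\<lambda>k. w (Suc k)) (fmat_vec M (deflate B) (\<lambda>k. w (Suc k))))"
    by (simp add: finner_fmat_vec_deflate[OF col row] mult.commute[of "cnj _"] flip: complex_norm_square)
  also have "\<dots> \<ge> \<gamma> * ((cmod (w 0))^2 + (\<Sum>i<M. (cmod (w (Suc i)))^2))"
    using IH[of "\<lambda>k. w (Suc k)"] mult_right_mono[OF Suc.prems(2)[OF l], of "(cmod (w 0))^2"]
    by (simp add: distrib_left mult.commute)
  also have "(cmod (w 0))^2 + (\<Sum>i<M. (cmod (w (Suc i)))^2) = (\<Sum>i<Suc M. (cmod (v i))^2)"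
  proof -
    have "of_real (\<Sum>i<Suc M. (cmod (w i))^2) = (of_real (\<Sum>i<Suc M. (cmod (v i))^2) :: complex)"
      using finner_householder[of "Suc M" u v v] by (simp only: w_def finner_self)
    then show ?thesis by (simp only: of_real_eq_iff sum.lessThan_Suc_shift)
  qed
  finally show ?case .
qed

lemma feigenvalue_cong:
  "(\<And>i j. i < N \<Longrightarrow> j < N \<Longrightarrow> A i j = B i j) \<Longrightarrow> feigenvalue N A l = feigenvalue N B l"
proof -
  assume "\<And>i j. i < N \<Longrightarrow> j < N \<Longrightarrow> A i j = B i j"
  then have "fmat_vec N A v i = fmat_vec N B v i" if "i < N" for v i
    unfolding fmat_vec_def using that by (intro sum.cong) auto
  then show ?thesis unfolding feigenvalue_def by auto
qed

lemma fisometry_unitary_mat: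
  assumes "unitary_mat N U"
  shows "fisometry N (\<lambda>i j. U $$ (i,j))"
  unfolding fisometry_def
proof (intro allI)
  fix v w
  have car: "U \<in> carrier_mat N N" and "mat_adjoint U * U = 1\<^sub>m N"
    using assms by (auto simp: unitary_mat_def)
  then have e: "(\<Sum>i<N. cnj (U $$ (i,j)) * U $$ (i,k)) = (if j = k then 1 else 0)"
    if "j < N" "k < N" for j k
    using that index_adjoint_mult_mat[OF car car that] by simp
  have "finner N (fmat_vec N (\<lambda>i j. U $$ (i,j)) v) (fmat_vec N (\<lambda>i j. U $$ (i,j)) w)
     = (\<Sum>i<N. \<Sum>j<N. \<Sum>k<N. cnj (v j) * w k * (cnj (U $$ (i,j)) * U $$ (i,k)))"
    unfolding finner_def fmat_vec_def by (simp add: sum_distrib_left sum_distrib_right algebra_simps)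
  also have "\<dots> = (\<Sum>j<N. \<Sum>i<N. \<Sum>k<N. cnj (v j) * w k * (cnj (U $$ (i,j)) * U $$ (i,k)))"
    by (rule sum.swap)
  also have "\<dots> = (\<Sum>j<N. \<Sum>k<N. \<Sum>i<N. cnj (v j) * w k * (cnj (U $$ (i,j)) * U $$ (i,k)))"
    by (rule sum.cong[OF refl], rule sum.swap)
  also have "\<dots> = (\<Sum>j<N. \<Sum>k<N. cnj (v j) * w k * (if j = k then 1 else 0))"
    by (intro sum.cong refl) (simp add: sum_distrib_left[symmetric] e)
  also have "\<dots> = finner N v w"
    unfolding finner_def by (intro sum.cong refl) (simp add: if_distrib sum.delta cong: if_cong)
  finally show "finner N (fmat_vec N (\<lambda>i j. U $$ (i,j)) v) (fmat_vec N (\<lambda>i j. U $$ (i,j)) w) =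
      finner N v w" .
qed

lemma norm_feigenvalue_fisometry:
  assumes "fisometry N A" "feigenvalue N A l"
  shows "cmod l = 1"
proof -
  obtain v where v: "\<exists>i<N. v i \<noteq> 0" "\<forall>i<N. fmat_vec N A v i = l * v i"
    using assms(2) unfolding feigenvalue_def by blast
  have "finner N v v = finner N (fmat_vec N A v) (fmat_vec N A v)"
    using assms(1) by (simp add: fisometry_def)
  also have "\<dots> = finner N (\<lambda>i. l * v i) (\<lambda>i. l * v i)"
    by (rule finner_cong) (simp_all add: v(2))
  also have "\<dots> = (cnj l * l) * finner N v v"
    unfolding finner_def by (simp add: sum_distrib_left algebra_simps)
  finally have eq: "finner N v v = (cnj l * l) * finner N v v" .
  obtain i where "i < N" "v i \<noteq> 0" using v(1) by blast
  then have "finner N v v \<noteq> 0"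
    unfolding finner_self of_real_eq_0_iff using sum_norm_power2_pos by (metis less_irrefl)
  with eq have "cnj l * l = 1" by (metis mult_cancel_right1)
  then have "(cmod l)^2 = 1"
    by (metis complex_norm_square mult.commute of_real_eq_1_iff)
  then show ?thesis using norm_ge_zero[of l] by (auto simp: power2_eq_1_iff)
qed

section \<open>The lower bound\<close>

lemma unitary_cost_eq_Max_spectrum:
  "unitary_cost U = Max ((\<lambda>z. \<bar>Arg z\<bar>) ` spectrum U)"
  unfolding unitary_cost_def spectrum_def by (rule arg_cong[where f = Max]) auto

lemma unitary_cost_bounds:
  assumes "U \<in> carrier_mat N N" "N > 0"
  shows "0 \<le> unitary_cost U" "unitary_cost U \<le> pi"
    and "eigenvalue U z \<Longrightarrow> \<bar>Arg z\<bar> \<le> unitary_cost U"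
proof -
  have fin: "finite ((\<lambda>z. \<bar>Arg z\<bar>) ` spectrum U)"
    using card_finite_spectrum(1)[OF assms(1)] by simp
  have ne: "(\<lambda>z. \<bar>Arg z\<bar>) ` spectrum U \<noteq> {}"
    using spectrum_non_empty[OF assms] by simp
  have "\<bar>Arg z\<bar> \<le> pi" for z
    using mpi_less_Arg[of z] Arg_le_pi[of z] by linarith
  then show "0 \<le> unitary_cost U" "unitary_cost U \<le> pi"
    using fin ne by (auto simp: unitary_cost_eq_Max_spectrum Max_ge_iff Max_le_iff)
  show "eigenvalue U z \<Longrightarrow> \<bar>Arg z\<bar> \<le> unitary_cost U"
    using fin by (auto simp: unitary_cost_eq_Max_spectrum spectrum_def)
qed

lemma cos_unitary_cost_le_diag:
  assumes U: "unitary_mat N U" and p: "p < N"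
  shows "cos (unitary_cost U) \<le> Re (U $$ (p,p))"
proof -
  let ?t = "unitary_cost U" and ?A = "\<lambda>i j. U $$ (i,j)"
  have car: "U \<in> carrier_mat N N" using U by (simp add: unitary_mat_def)
  have N: "N > 0" using p by simp
  have "cos ?t \<le> Re l" if "feigenvalue N ?A l" for l
  proof -
    have "eigenvalue U l" using that eigenvalue_iff_feigenvalue[OF car] by simp
    then have "\<bar>Arg l\<bar> \<le> ?t" by (rule unitary_cost_bounds(3)[OF car N])
    then have "cos ?t \<le> cos \<bar>Arg l\<bar>"
      using unitary_cost_bounds(1,2)[OF car N] by (subst cos_mono_le_eq) auto
    also have "cos \<bar>Arg l\<bar> = Re (rcis (cmod l) (Arg l))"
      using norm_feigenvalue_fisometry[OF fisometry_unitary_mat[OF U] that] by simp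
    also have "\<dots> = Re l" by (simp only: rcis_cmod_Arg)
    finally show ?thesis .
  qed
  then have "cos ?t * (\<Sum>i<N. (cmod (if i = p then 1 else 0))^2) \<le>
      Re (finner N (\<lambda>i. if i = p then 1 else 0) (fmat_vec N ?A (\<lambda>i. if i = p then 1 else 0)))"
    by (intro fisometry_numerical_range fisometry_unitary_mat[OF U])
  also have "(\<Sum>i<N. (cmod (if i = p then 1 else 0 :: complex))^2) = (\<Sum>i<N. if i = p then 1 else 0)"
    by (intro sum.cong) auto
  also have "\<dots> = 1" using p by simp
  also have "finner N (\<lambda>i. if i = p then 1 else 0) (fmat_vec N ?A (\<lambda>i. if i = p then 1 else 0)) =
      U $$ (p,p)"
    using p by (simp add: finner_basis_left fmat_vec_basis)
  finally show ?thesis by simp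
qed

lemma dilation_cost_ge_arccos:
  fixes K :: "nat \<Rightarrow> complex mat"
  assumes n: "n \<ge> 1" and d: "d \<ge> 1"
    and K: "\<forall>j<d. K j \<in> carrier_mat n n"
    and C: "mat n n (\<lambda>(i, k). \<Sum>j<d. (mat_adjoint (K j) * K j) $$ (i, k)) = 1\<^sub>m n"
    and K0: "K 0 = \<alpha> \<cdot>\<^sub>m 1\<^sub>m n"
    and tr: "\<forall>j. 1 \<le> j \<and> j < d \<longrightarrow> mat_trace (K j) = 0"
    and m: "m \<ge> 1" and U: "unitary_mat (m*n) U"
    and dil: "\<forall>\<rho>. density_mat n \<rho> \<longrightarrow>
                kraus_channel n d K \<rho> = ptrace_B m n (U * anc_state m n \<rho> * mat_adjoint U)"
  shows "arccos (cmod \<alpha>) \<le> unitary_cost U"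
proof -
  let ?t = "unitary_cost U"
  have car: "U \<in> carrier_mat (m*n) (m*n)" using U by (simp add: unitary_mat_def)
  have N: "m*n > 0" using n m by simp
  have "real n * cos ?t = (\<Sum>p<n. cos ?t)" by simp
  also have "\<dots> \<le> (\<Sum>p<n. Re (U $$ (p,p)))"
    using m by (intro sum_mono cos_unitary_cost_le_diag[OF U]) (simp add: less_le_trans)
  also have "\<dots> = Re (\<Sum>p<n. U $$ (p,p))" by (simp add: Re_sum)
  also have "\<dots> \<le> cmod (\<Sum>p<n. U $$ (p,p))" by (rule complex_Re_le_cmod)
  also have "\<dots> \<le> real n * cmod \<alpha>"
    by (rule dilation_corner_trace_bound[OF K d K0 tr car m dil])
  finally have "cos ?t \<le> cmod \<alpha>" using n by simp
  then have "arccos (cmod \<alpha>) \<le> arccos (cos ?t)"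
    using norm_identity_kraus_le_1[OF K n d C K0] by (intro arccos_le_arccos) auto
  also have "\<dots> = ?t"
    using unitary_cost_bounds(1,2)[OF car N] by (rule arccos_cos)
  finally show ?thesis .
qed

section \<open>An optimal dilation\<close>

locale optimal_dilation =
  fixes n d :: nat and K :: "nat \<Rightarrow> complex mat" and \<alpha> :: complex
  assumes n: "n \<ge> 1" and d: "d \<ge> 1"
    and K: "\<forall>j<d. K j \<in> carrier_mat n n"
    and C: "mat n n (\<lambda>(i, k). \<Sum>j<d. (mat_adjoint (K j) * K j) $$ (i, k)) = 1\<^sub>m n"
    and K0: "K 0 = \<alpha> \<cdot>\<^sub>m 1\<^sub>m n"
begin

text \<open>The optimal dilation, with \<open>c = |\<alpha>| = cos \<theta>\<close> and \<open>s = sin \<theta>\<close>. Its columns \<open>a < n\<close> must be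
  \<open>c e\<^sub>a + T\<^sub>a\<close>, where \<open>T\<^sub>a\<close> stacks \<open>\<omega> K\<^sub>j e\<^sub>a\<close> for \<open>j \<ge> 1\<close> and the phase \<open>\<omega>\<close> makes \<open>\<omega> \<alpha> = c\<close>;
  the \<open>T\<^sub>a\<close> are orthogonal of norm s. With \<open>V\<^sub>a = T\<^sub>a / (i s)\<close> and \<open>W\<^sub>a = e\<^sub>a - V\<^sub>a\<close>, P is twice the
  orthogonal projection onto the span of the \<open>W\<^sub>a\<close>, so \<open>Z = i s (I - P)\<close> is skew-Hermitian with
  \<open>Z\<^sup>2 = -s\<^sup>2 I\<close>. Hence \<open>U = c I + Z\<close> is unitary with eigenvalues \<open>c \<plusminus> i s = exp (\<plusminus> i \<theta>)\<close>, and
  \<open>U e\<^sub>a = c e\<^sub>a + i s V\<^sub>a = c e\<^sub>a + T\<^sub>a\<close>. If \<open>s = 0\<close> the junk value of \<open>V\<close> is harmless since then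
  \<open>T = 0\<close>.\<close>

definition c :: real where
  "c = cmod \<alpha>"
definition s :: real where
  "s = sqrt (1 - c^2)"
definition \<omega> :: complex where
  "\<omega> = (if \<alpha> = 0 then 1 else cnj \<alpha> / of_real c)"
definition N :: nat where
  "N = d * n"
definition E :: "nat \<Rightarrow> nat \<Rightarrow> complex" where
  "E i a = (if i = a then 1 else (0::complex))"
definition T :: "nat \<Rightarrow> nat \<Rightarrow> complex" where
  "T i a = (if n \<le> i then \<omega> * K (i div n) $$ (i mod n, a) else 0)"
definition V :: "nat \<Rightarrow> nat \<Rightarrow> complex" where
  "V i a = (- \<i> / of_real s) * T i a"
definition W :: "nat \<Rightarrow> nat \<Rightarrow> complex" where
  "W i a = E i a - V i a"
definition P :: "nat \<Rightarrow> nat \<Rightarrow> complex" where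
  "P i j = (\<Sum>a<n. W i a * cnj (W j a))"
definition Z :: "nat \<Rightarrow> nat \<Rightarrow> complex" where
  "Z i j = \<i> * of_real s * ((if i = j then 1 else 0) - P i j)"
definition U_entry :: "nat \<Rightarrow> nat \<Rightarrow> complex" where
  "U_entry i j = of_real c * (if i = j then 1 else 0) + Z i j"

lemma c_nonneg: "c \<ge> 0"
  by (simp add: c_def)

lemma c_le_1: "c \<le> 1"
  unfolding c_def by (rule norm_identity_kraus_le_1[OF K n d C K0])

lemma c_s_sq: "c^2 + s^2 = 1"
  using power_le_one[OF c_nonneg c_le_1] by (simp add: s_def)

lemma cnj_omega_omega: "cnj \<omega> * \<omega> = 1"
proof (cases "\<alpha> = 0")
  case True then show ?thesis unfolding \<omega>_def by simp
next
  case False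
  then have "cmod \<omega> = 1" by (simp add: \<omega>_def c_def norm_divide)
  then show ?thesis using complex_norm_square[of \<omega>] by (simp add: mult.commute)
qed

lemma omega_alpha: "\<omega> * \<alpha> = of_real c"
proof (cases "\<alpha> = 0")
  case True then show ?thesis unfolding \<omega>_def c_def by simp
next
  case False
  then have "\<omega> * \<alpha> = (cnj \<alpha> * \<alpha>) / of_real c" by (simp add: \<omega>_def)
  also have "cnj \<alpha> * \<alpha> = of_real (c^2)" unfolding c_def using complex_norm_square[of \<alpha>] by (simp add: mult.commute)
  finally show ?thesis using False by (simp add: c_def power2_eq_square)
qed

lemma T_first_block: "i < n \<Longrightarrow> T i a = 0" by (simp add: T_def)
lemma V_first_block: "i < n \<Longrightarrow> V i a = 0" by (simp add: V_def T_first_block)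

lemma n_le_N: "n \<le> N" using d by (simp add: N_def)

lemma T_inner:
  assumes "a < n" "b < n"
  shows "(\<Sum>i<N. cnj (T i a) * T i b) = of_real (s^2) * (if a = b then 1 else 0)"
proof -
  have "(\<Sum>i<N. cnj (T i a) * T i b) = (\<Sum>j<d. \<Sum>r<n. cnj (T (j*n+r) a) * T (j*n+r) b)"
    unfolding N_def by (rule sum_lessThan_mult_blocks)
  also have "\<dots> = (\<Sum>j<d. if j = 0 then 0 else \<Sum>r<n. cnj (K j $$ (r,a)) * K j $$ (r,b))"
  proof (rule sum.cong[OF refl])
    fix j assume "j \<in> {..<d}"
    show "(\<Sum>r<n. cnj (T (j*n+r) a) * T (j*n+r) b) = (if j = 0 then 0 else \<Sum>r<n. cnj (K j $$ (r,a)) * K j $$ (r,b))"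
    proof (cases "j = 0")
      case True then show ?thesis by (simp add: T_first_block)
    next
      case False
      have "(\<Sum>r<n. cnj (T (j*n+r) a) * T (j*n+r) b) = (\<Sum>r<n. (cnj \<omega> * \<omega>) * (cnj (K j $$ (r,a)) * K j $$ (r,b)))"
      proof (rule sum.cong[OF refl])
        fix r assume r: "r \<in> {..<n}"
        have "n \<le> j*n + r" using False by (simp add: trans_le_add1)
        moreover have "(j*n+r) div n = j" "(j*n+r) mod n = r" using r by auto
        ultimately show "cnj (T (j*n+r) a) * T (j*n+r) b = (cnj \<omega> * \<omega>) * (cnj (K j $$ (r,a)) * K j $$ (r,b))"
          by (simp add: T_def algebra_simps)
      qed
      then show ?thesis using False by (simp add: cnj_omega_omega)
    qed
  qed
  also have "\<dots> = (\<Sum>j<d. \<Sum>r<n. cnj (K j $$ (r,a)) * K j $$ (r,b)) - (\<Sum>r<n. cnj (K 0 $$ (r,a)) * K 0 $$ (r,b))"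
  proof -
    have "(\<Sum>j<d. \<Sum>r<n. cnj (K j $$ (r,a)) * K j $$ (r,b)) =
      (\<Sum>r<n. cnj (K 0 $$ (r,a)) * K 0 $$ (r,b)) + (\<Sum>j\<in>{..<d}-{0}. \<Sum>r<n. cnj (K j $$ (r,a)) * K j $$ (r,b))"
      using d by (subst sum.remove[of _ 0]) auto
    moreover have "(\<Sum>j<d. if j = 0 then 0 else \<Sum>r<n. cnj (K j $$ (r,a)) * K j $$ (r,b)) =
       (\<Sum>j\<in>{..<d}-{0}. \<Sum>r<n. cnj (K j $$ (r,a)) * K j $$ (r,b))"
      using d by (subst sum.remove[of _ 0]) (auto intro!: sum.cong)
    ultimately show ?thesis by simp
  qed
  also have "(\<Sum>r<n. cnj (K 0 $$ (r,a)) * K 0 $$ (r,b)) = (\<Sum>r<n. if r = a \<and> r = b then cnj \<alpha> * \<alpha> else 0)"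
    using assms by (intro sum.cong) (auto simp: K0)
  also have "\<dots> = (if a = b then cnj \<alpha> * \<alpha> else 0)"
    using assms by (cases "a = b") (auto simp: sum.delta' intro: sum.neutral)
  also have "cnj \<alpha> * \<alpha> = of_real (c^2)" unfolding c_def using complex_norm_square[of \<alpha>] by (simp add: mult.commute)
  also have "(\<Sum>j<d. \<Sum>r<n. cnj (K j $$ (r,a)) * K j $$ (r,b)) = (if a = b then 1 else 0)"
    by (rule kraus_completeness_index[OF K C assms])
  finally have "(\<Sum>i<N. cnj (T i a) * T i b) = (if a = b then 1 else 0) - (if a = b then complex_of_real (c^2) else 0)" .
  moreover have "(complex_of_real s)^2 = 1 - (complex_of_real c)^2"
    using arg_cong[OF c_s_sq, of complex_of_real] by (simp add: algebra_simps)
  ultimately show ?thesis by (cases "a = b") simp_all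
qed

lemma T_eq_0_if_s_eq_0:
  assumes "s = 0" "i < N" "a < n" shows "T i a = 0"
proof -
  have "(\<Sum>i<N. cnj (T i a) * T i a) = 0" using T_inner[OF assms(3) assms(3)] assms(1) by simp
  then have "complex_of_real (\<Sum>i<N. (cmod (T i a))^2) = 0"
    using finner_self[of N "\<lambda>i. T i a"] by (simp add: finner_def)
  then have "(\<Sum>i<N. (cmod (T i a))^2) = 0" by (simp only: of_real_eq_0_iff)
  then show ?thesis using assms(2) by (simp add: sum_nonneg_eq_0_iff)
qed

lemma E_inner: "a < n \<Longrightarrow> b < n \<Longrightarrow> (\<Sum>i<N. cnj (E i a) * E i b) = (if a = b then 1 else 0)"
proof -
  assume ab: "a < n" "b < n"
  have "(\<Sum>i<N. cnj (E i a) * E i b) = (\<Sum>i<N. if i = a then (if a = b then 1 else 0) else 0)"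
    by (intro sum.cong) (auto simp: E_def)
  also have "\<dots> = (if a = b then 1 else 0)" using ab n_le_N by simp
  finally show ?thesis .
qed

lemma E_V_inner: "a < n \<Longrightarrow> (\<Sum>i<N. cnj (E i a) * V i b) = 0"
  by (intro sum.neutral) (auto simp: E_def V_first_block)

lemma V_E_inner: "a < n \<Longrightarrow> (\<Sum>i<N. cnj (V i b) * E i a) = 0"
  by (intro sum.neutral) (auto simp: E_def V_first_block)

lemma V_inner:
  assumes "s \<noteq> 0" "a < n" "b < n"
  shows "(\<Sum>i<N. cnj (V i a) * V i b) = (if a = b then 1 else 0)"
proof -
  have "(\<Sum>i<N. cnj (V i a) * V i b) = (cnj (- \<i> / of_real s) * (- \<i> / of_real s)) * (\<Sum>i<N. cnj (T i a) * T i b)"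
    by (simp add: V_def sum_distrib_left algebra_simps)
  also have "\<dots> = (1 / of_real (s^2)) * (of_real (s^2) * (if a = b then 1 else 0))"
    using T_inner[OF assms(2,3)] by (simp add: power2_eq_square)
  finally show ?thesis using assms(1) by simp
qed

lemma W_inner:
  assumes "s \<noteq> 0" "a < n" "b < n"
  shows "(\<Sum>i<N. cnj (W i a) * W i b) = 2 * (if a = b then 1 else 0)"
proof -
  have "(\<Sum>i<N. cnj (W i a) * W i b) = (\<Sum>i<N. cnj (E i a) * E i b) - (\<Sum>i<N. cnj (E i a) * V i b)
      - (\<Sum>i<N. cnj (V i a) * E i b) + (\<Sum>i<N. cnj (V i a) * V i b)"
    by (simp add: W_def algebra_simps sum.distrib sum_subtractf)
  then show ?thesis using E_inner[OF assms(2,3)] E_V_inner[OF assms(2)] V_E_inner[OF assms(3)] V_inner[OF assms] by simp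
qed

lemma P_square:
  assumes "s \<noteq> 0" shows "(\<Sum>k<N. P i k * P k j) = 2 * P i j"
proof -
  have "(\<Sum>k<N. P i k * P k j) = (\<Sum>k<N. \<Sum>a<n. \<Sum>b<n. W i a * (cnj (W k a) * W k b) * cnj (W j b))"
    by (simp add: P_def sum_distrib_left sum_distrib_right algebra_simps)
  also have "\<dots> = (\<Sum>a<n. \<Sum>k<N. \<Sum>b<n. W i a * (cnj (W k a) * W k b) * cnj (W j b))"
    by (rule sum.swap)
  also have "\<dots> = (\<Sum>a<n. \<Sum>b<n. \<Sum>k<N. W i a * (cnj (W k a) * W k b) * cnj (W j b))"
    by (rule sum.cong[OF refl], rule sum.swap)
  also have "\<dots> = (\<Sum>a<n. \<Sum>b<n. W i a * (2 * (if a = b then 1 else 0)) * cnj (W j b))"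
    by (intro sum.cong refl) (simp add: sum_distrib_left[symmetric] sum_distrib_right[symmetric] W_inner[OF assms])
  also have "\<dots> = (\<Sum>a<n. 2 * (W i a * cnj (W j a)))"
  proof (rule sum.cong[OF refl])
    fix a assume a: "a \<in> {..<n}"
    have "(\<Sum>b<n. W i a * (2 * (if a = b then 1 else 0)) * cnj (W j b)) = (\<Sum>b<n. if a = b then 2 * (W i a * cnj (W j a)) else 0)"
      by (intro sum.cong) auto
    then show "(\<Sum>b<n. W i a * (2 * (if a = b then 1 else 0)) * cnj (W j b)) = 2 * (W i a * cnj (W j a))"
      using a by simp
  qed
  also have "\<dots> = 2 * P i j" by (simp add: P_def sum_distrib_left)
  finally show ?thesis .
qed

lemma Z_square:
  assumes "i < N" "j < N"
  shows "(\<Sum>k<N. Z i k * Z k j) = - of_real (s^2) * (if i = j then 1 else 0)"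
proof (cases "s = 0")
  case True then show ?thesis by (simp add: Z_def)
next
  case False
  define \<delta> where "\<delta> i j = (if i = j then 1 else (0::complex))" for i j :: nat
  have "(\<Sum>k<N. Z i k * Z k j) = (\<i> * of_real s)^2 * (\<Sum>k<N. (\<delta> i k - P i k) * (\<delta> k j - P k j))"
    by (simp add: Z_def \<delta>_def sum_distrib_left power2_eq_square algebra_simps)
  also have "(\<Sum>k<N. (\<delta> i k - P i k) * (\<delta> k j - P k j)) =
      (\<Sum>k<N. \<delta> i k * \<delta> k j) - (\<Sum>k<N. \<delta> i k * P k j) - (\<Sum>k<N. P i k * \<delta> k j) + (\<Sum>k<N. P i k * P k j)"
    by (simp add: algebra_simps sum.distrib sum_subtractf)
  also have "(\<Sum>k<N. \<delta> i k * \<delta> k j) = \<delta> i j" using assms by (simp add: \<delta>_def mult_delta_left mult_delta_right sum.delta sum.delta')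
  also have "(\<Sum>k<N. \<delta> i k * P k j) = P i j" using assms by (simp add: \<delta>_def mult_delta_left mult_delta_right sum.delta sum.delta')
  also have "(\<Sum>k<N. P i k * \<delta> k j) = P i j" using assms by (simp add: \<delta>_def mult_delta_left mult_delta_right sum.delta sum.delta')
  also have "(\<Sum>k<N. P i k * P k j) = 2 * P i j" by (rule P_square[OF False])
  finally show ?thesis by (simp add: \<delta>_def power2_eq_square algebra_simps)
qed

lemma cnj_Z: "cnj (Z j i) = - Z i j"
proof -
  have "cnj (P j i) = P i j" by (simp add: P_def mult.commute)
  then show ?thesis by (simp add: Z_def algebra_simps)
qed

definition U_dil :: "complex mat" where
  "U_dil = mat N N (\<lambda>(i,j). U_entry i j)"

lemma U_dil_carrier: "U_dil \<in> carrier_mat N N" by (simp add: U_dil_def)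

lemma U_entry_mult_adjoint:
  assumes "i < N" "j < N"
  shows "(\<Sum>k<N. U_entry i k * cnj (U_entry j k)) = (if i = j then 1 else 0)"
proof -
  have "(\<Sum>k<N. U_entry i k * cnj (U_entry j k)) =
     (\<Sum>k<N. (of_real c * (if i = k then 1 else 0) + Z i k) * (of_real c * (if j = k then 1 else 0) - Z k j))"
    by (intro sum.cong refl) (simp add: U_entry_def cnj_Z)
  also have "\<dots> = (\<Sum>k<N. of_real c * of_real c * ((if i = k then 1 else 0) * (if j = k then 1 else 0)))
      - (\<Sum>k<N. of_real c * ((if i = k then 1 else 0) * Z k j)) + (\<Sum>k<N. of_real c * (Z i k * (if j = k then 1 else 0)))
      - (\<Sum>k<N. Z i k * Z k j)"
    by (simp add: algebra_simps sum.distrib sum_subtractf)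
  also have "\<dots> = of_real c * of_real c * (if i = j then 1 else 0) - of_real c * Z i j + of_real c * Z i j
      + of_real (s^2) * (if i = j then 1 else 0)"
    using assms by (simp add: Z_square sum_distrib_left[symmetric] mult_delta_left mult_delta_right sum.delta sum.delta')
  also have "\<dots> = (if i = j then 1 else 0)"
  proof -
    have "of_real c * of_real c + of_real (s^2) = (1::complex)"
      using arg_cong[OF c_s_sq, of complex_of_real] by (simp add: power2_eq_square)
    then show ?thesis by (simp add: algebra_simps)
  qed
  finally show ?thesis .
qed

lemma U_entry_adjoint_mult:
  assumes "i < N" "j < N"
  shows "(\<Sum>k<N. cnj (U_entry k i) * U_entry k j) = (if i = j then 1 else 0)"
proof -
  have "(\<Sum>k<N. cnj (U_entry k i) * U_entry k j) =
     (\<Sum>k<N. (of_real c * (if k = i then 1 else 0) - Z i k) * (of_real c * (if k = j then 1 else 0) + Z k j))"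
    by (intro sum.cong refl) (simp add: U_entry_def cnj_Z)
  also have "\<dots> = (\<Sum>k<N. of_real c * of_real c * ((if k = i then 1 else 0) * (if k = j then 1 else 0)))
      + (\<Sum>k<N. of_real c * ((if k = i then 1 else 0) * Z k j)) - (\<Sum>k<N. of_real c * (Z i k * (if k = j then 1 else 0)))
      - (\<Sum>k<N. Z i k * Z k j)"
    by (simp add: algebra_simps sum.distrib sum_subtractf)
  also have "\<dots> = of_real c * of_real c * (if i = j then 1 else 0) + of_real c * Z i j - of_real c * Z i j
      + of_real (s^2) * (if i = j then 1 else 0)"
    using assms by (simp add: Z_square sum_distrib_left[symmetric] mult_delta_left mult_delta_right sum.delta sum.delta')
  also have "\<dots> = (if i = j then 1 else 0)"
  proof -
    have "of_real c * of_real c + of_real (s^2) = (1::complex)"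
      using arg_cong[OF c_s_sq, of complex_of_real] by (simp add: power2_eq_square)
    then show ?thesis by (simp add: algebra_simps)
  qed
  finally show ?thesis .
qed

lemma unitary_U_dil: "unitary_mat N U_dil"
  unfolding unitary_mat_def
proof (intro conjI)
  show "U_dil \<in> carrier_mat N N" by (rule U_dil_carrier)
  show "U_dil * mat_adjoint U_dil = 1\<^sub>m N"
  proof (rule eq_matI)
    fix i j assume "i < dim_row (1\<^sub>m N)" "j < dim_col (1\<^sub>m N)"
    then have ij: "i < N" "j < N" by auto
    have "(U_dil * mat_adjoint U_dil) $$ (i,j) = (\<Sum>k<N. U_entry i k * cnj (U_entry j k))"
      using index_mult_mat_adjoint[OF U_dil_carrier U_dil_carrier ij] ij by (simp add: U_dil_def)
    then show "(U_dil * mat_adjoint U_dil) $$ (i,j) = 1\<^sub>m N $$ (i,j)"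
      using U_entry_mult_adjoint[OF ij] ij by simp
  qed (auto simp: U_dil_def)
  show "mat_adjoint U_dil * U_dil = 1\<^sub>m N"
  proof (rule eq_matI)
    fix i j assume "i < dim_row (1\<^sub>m N)" "j < dim_col (1\<^sub>m N)"
    then have ij: "i < N" "j < N" by auto
    have "(mat_adjoint U_dil * U_dil) $$ (i,j) = (\<Sum>k<N. cnj (U_entry k i) * U_entry k j)"
      using index_adjoint_mult_mat[OF U_dil_carrier U_dil_carrier ij] ij by (simp add: U_dil_def)
    then show "(mat_adjoint U_dil * U_dil) $$ (i,j) = 1\<^sub>m N $$ (i,j)"
      using U_entry_adjoint_mult[OF ij] ij by simp
  qed (auto simp: U_dil_def)
qed

lemma U_entry_first_columns:
  assumes "i < N" "p < n"
  shows "U_entry i p = of_real c * E i p + T i p"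
proof -
  have Wp: "W p a = E p a" for a using assms(2) by (simp add: W_def V_first_block)
  have "P i p = (\<Sum>a<n. W i a * cnj (E p a))" by (simp add: P_def Wp)
  also have "\<dots> = (\<Sum>a<n. if a = p then W i a else 0)" by (intro sum.cong) (auto simp: E_def)
  also have "\<dots> = W i p" using assms(2) by simp
  finally have Pp: "P i p = E i p - V i p" by (simp add: W_def)
  have "U_entry i p = of_real c * E i p + \<i> * of_real s * V i p"
    by (simp add: U_entry_def Z_def Pp E_def algebra_simps)
  also have "\<i> * of_real s * V i p = T i p"
  proof (cases "s = 0")
    case True then show ?thesis using T_eq_0_if_s_eq_0[OF True assms] by (simp add: V_def)
  next
    case False then show ?thesis by (simp add: V_def)
  qed
  finally show ?thesis .
qed

lemma U_entry_block:
  assumes "b < d" "a < n" "p < n"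
  shows "U_entry (b*n+a) p = \<omega> * K b $$ (a,p)"
proof -
  have bi: "b*n + a < N"
    using assms by (simp add: N_def block_index_less)
  show ?thesis
  proof (cases "b = 0")
    case True
    have "U_entry (b*n+a) p = of_real c * E a p" using U_entry_first_columns[OF bi assms(3)] True assms by (simp add: T_first_block)
    also have "\<dots> = \<omega> * K b $$ (a,p)"
      using True assms by (simp add: K0 E_def omega_alpha[symmetric])
    finally show ?thesis .
  next
    case False
    then have ge: "n \<le> b*n + a" by (simp add: trans_le_add1)
    then have "E (b*n+a) p = 0" using assms by (simp add: E_def)
    moreover have "(b*n+a) div n = b" "(b*n+a) mod n = a" using assms by auto
    ultimately show ?thesis using U_entry_first_columns[OF bi assms(3)] ge by (simp add: T_def)
  qed
qed

lemma U_dil_dilation: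
  assumes "\<rho> \<in> carrier_mat n n"
  shows "kraus_channel n d K \<rho> = ptrace_B d n (U_dil * anc_state d n \<rho> * mat_adjoint U_dil)"
proof (rule eq_matI)
  fix a a' assume "a < dim_row (ptrace_B d n (U_dil * anc_state d n \<rho> * mat_adjoint U_dil))"
     "a' < dim_col (ptrace_B d n (U_dil * anc_state d n \<rho> * mat_adjoint U_dil))"
  then have aa: "a < n" "a' < n" by (auto simp: ptrace_B_def)
  have U: "U_dil \<in> carrier_mat (d*n) (d*n)" using U_dil_carrier by (simp add: N_def)
  have bi: "b*n + x < N" if "b < d" "x < n" for b x
    using that by (simp add: N_def block_index_less)
  have "ptrace_B d n (U_dil * anc_state d n \<rho> * mat_adjoint U_dil) $$ (a,a') =
     (\<Sum>b<d. \<Sum>p<n. \<Sum>q<n. U_dil $$ (b*n+a,p) * \<rho> $$ (p,q) * cnj (U_dil $$ (b*n+a',q)))"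
    by (rule index_ptrace_B_dilation[OF U d aa])
  also have "\<dots> = (\<Sum>b<d. \<Sum>p<n. \<Sum>q<n. (cnj \<omega> * \<omega>) * (K b $$ (a,p) * \<rho> $$ (p,q) * cnj (K b $$ (a',q))))"
  proof (intro sum.cong refl)
    fix b p q assume "b \<in> {..<d}" "p \<in> {..<n}" "q \<in> {..<n}"
    then have bpq: "b < d" "p < n" "q < n" by auto
    have "U_dil $$ (b*n+a,p) = U_entry (b*n+a) p" using bi[OF bpq(1) aa(1)] bpq n_le_N by (simp add: U_dil_def)
    moreover have "U_dil $$ (b*n+a',q) = U_entry (b*n+a') q" using bi[OF bpq(1) aa(2)] bpq n_le_N by (simp add: U_dil_def)
    ultimately show "U_dil $$ (b*n+a,p) * \<rho> $$ (p,q) * cnj (U_dil $$ (b*n+a',q)) =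
       (cnj \<omega> * \<omega>) * (K b $$ (a,p) * \<rho> $$ (p,q) * cnj (K b $$ (a',q)))"
      using U_entry_block[OF bpq(1) aa(1) bpq(2)] U_entry_block[OF bpq(1) aa(2) bpq(3)] by (simp add: algebra_simps)
  qed
  also have "\<dots> = kraus_channel n d K \<rho> $$ (a,a')"
    by (simp add: index_kraus_channel[OF K assms aa] cnj_omega_omega)
  finally show "kraus_channel n d K \<rho> $$ (a,a') = ptrace_B d n (U_dil * anc_state d n \<rho> * mat_adjoint U_dil) $$ (a,a')" ..
qed (simp_all add: kraus_channel_def ptrace_B_def)

lemma U_entry_eigenvalue:
  assumes "feigenvalue N U_entry l"
  shows "l = of_real c + \<i> * of_real s \<or> l = of_real c - \<i> * of_real s"
proof -
  obtain v where v: "\<exists>i<N. v i \<noteq> 0" "\<forall>i<N. fmat_vec N U_entry v i = l * v i" using assms unfolding feigenvalue_def by blast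
  have Zv: "fmat_vec N Z v i = (l - of_real c) * v i" if "i < N" for i
  proof -
    have "fmat_vec N U_entry v i = of_real c * v i + fmat_vec N Z v i"
      using that by (simp add: fmat_vec_def U_entry_def distrib_right sum.distrib mult.assoc mult_delta_left sum.delta sum_distrib_left[symmetric])
    then show ?thesis using v(2) that by (simp add: algebra_simps)
  qed
  obtain i where i: "i < N" "v i \<noteq> 0" using v(1) by blast
  have "fmat_vec N Z (fmat_vec N Z v) i = fmat_vec N (fmat_mult N Z Z) v i" by (simp add: fmat_vec_fmat_mult)
  also have "\<dots> = (\<Sum>j<N. (- of_real (s^2) * (if i = j then 1 else 0)) * v j)"
    unfolding fmat_vec_def fmat_mult_def using i by (intro sum.cong refl) (simp add: Z_square)
  also have "\<dots> = (\<Sum>j<N. if i = j then - of_real (s^2) * v i else 0)" by (intro sum.cong) auto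
  also have "\<dots> = - of_real (s^2) * v i" using i by simp
  finally have 1: "fmat_vec N Z (fmat_vec N Z v) i = - of_real (s^2) * v i" .
  have "fmat_vec N Z (fmat_vec N Z v) i = fmat_vec N Z (\<lambda>j. (l - of_real c) * v j) i"
    by (rule arg_cong[where f="\<lambda>f. f i"], rule fmat_vec_cong) (simp add: Zv)
  also have "\<dots> = (l - of_real c) * ((l - of_real c) * v i)" using Zv[OF i(1)] by (simp add: fmat_vec_scale)
  finally have "(l - of_real c) * ((l - of_real c) * v i) = - of_real (s^2) * v i" using 1 by simp
  then have "((l - of_real c)^2 + of_real (s^2)) * v i = 0" by (simp add: algebra_simps power2_eq_square)
  then have "(l - of_real c)^2 + of_real (s^2) = 0" using i by simp
  then have "(l - (of_real c + \<i> * of_real s)) * (l - (of_real c - \<i> * of_real s)) = 0"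
    by (simp add: algebra_simps power2_eq_square)
  then show ?thesis by simp
qed

lemma arccos_c: "cos (arccos c) = c" "sin (arccos c) = s" "0 \<le> arccos c" "arccos c < pi"
proof -
  show "cos (arccos c) = c" using c_nonneg c_le_1 by simp
  show "sin (arccos c) = s" using c_nonneg c_le_1 by (simp add: sin_arccos s_def)
  show "0 \<le> arccos c" using c_nonneg c_le_1 by (simp add: arccos_lbound)
  have "arccos c \<le> pi/2" using c_nonneg c_le_1 by (rule arccos_le_pi2)
  then show "arccos c < pi" using pi_gt_zero by linarith
qed

lemma Arg_U_entry_eigenvalue:
  assumes "feigenvalue N U_entry l" shows "\<bar>Arg l\<bar> = arccos c"
proof -
  let ?t = "arccos c"
  have cp: "of_real c + \<i> * of_real s = cis ?t" by (rule complex_eqI) (simp_all add: arccos_c)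
  have cm: "of_real c - \<i> * of_real s = cis (- ?t)" by (rule complex_eqI) (simp_all add: arccos_c)
  have "Arg (cis ?t) = ?t" using arccos_c by (intro Arg_cis) auto
  moreover have "Arg (cis (- ?t)) = - ?t" using arccos_c by (intro Arg_cis) auto
  ultimately show ?thesis using U_entry_eigenvalue[OF assms] arccos_c(3) cp cm by auto
qed

lemma unitary_cost_U_dil: "unitary_cost U_dil = arccos c"
proof -
  have N0: "N > 0" using n d by (simp add: N_def)
  have ev: "eigenvalue U_dil z \<longleftrightarrow> feigenvalue N U_entry z" for z
    using eigenvalue_iff_feigenvalue[OF U_dil_carrier, of z] feigenvalue_cong[of N "\<lambda>i j. U_dil $$ (i,j)" U_entry z] by (simp add: U_dil_def)
  obtain z0 where "eigenvalue U_dil z0" using spectrum_non_empty[OF U_dil_carrier N0] by (auto simp: spectrum_def)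
  have S: "{\<bar>Arg z\<bar> | z. eigenvalue U_dil z} = {arccos c}"
  proof
    show "{\<bar>Arg z\<bar> | z. eigenvalue U_dil z} \<subseteq> {arccos c}" using Arg_U_entry_eigenvalue ev by blast
    show "{arccos c} \<subseteq> {\<bar>Arg z\<bar> | z. eigenvalue U_dil z}"
      using Arg_U_entry_eigenvalue ev \<open>eigenvalue U_dil z0\<close> by force
  qed
  show ?thesis unfolding unitary_cost_def S by simp
qed

end

theorem theorem3:
  fixes n d :: nat and K :: "nat \<Rightarrow> complex mat" and \<alpha> :: complex
  assumes "n \<ge> 1" and "d \<ge> 1"
    and "\<forall>j<d. K j \<in> carrier_mat n n"
    and "mat n n (\<lambda>(i, k). \<Sum>j<d. (mat_adjoint (K j) * K j) $$ (i, k)) = 1\<^sub>m n"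
    and "K 0 = \<alpha> \<cdot>\<^sub>m 1\<^sub>m n"
    and "\<forall>j. 1 \<le> j \<and> j < d \<longrightarrow> mat_trace (K j) = 0"
  shows "channel_cost n (kraus_channel n d K) = arccos (cmod \<alpha>)"
proof -
  interpret optimal_dilation n d K \<alpha>
    using assms by unfold_locales auto
  let ?costs = "{unitary_cost U | U m. m \<ge> 1 \<and> unitary_mat (m * n) U \<and>
     (\<forall>\<rho>. density_mat n \<rho> \<longrightarrow> kraus_channel n d K \<rho> = ptrace_B m n (U * anc_state m n \<rho> * mat_adjoint U))}"
  have "arccos (cmod \<alpha>) \<in> ?costs"
    using assms(2) unitary_U_dil U_dil_dilation unitary_cost_U_dil
    by (auto simp: N_def c_def density_mat_def intro!: exI[of _ U_dil] exI[of _ d])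
  moreover have "arccos (cmod \<alpha>) \<le> x" if "x \<in> ?costs" for x
    using that dilation_cost_ge_arccos[OF assms] by blast
  ultimately show ?thesis
    unfolding channel_cost_def by (rule cInf_eq_minimum)
qed

end
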